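(* Let $\xi\in\mathbb{R}$ be transcendental over $\mathbb{Q}$ (i.e. $\xi\notin\overline{\mathbb{Q}}$), and let $k,n$ be integers with $2\le k\le n$. Then \[ \lambda_n(\xi)\ge \frac{\omega_k(\xi)-n+k}{(k-1)\,\omega_k(\xi)+n}. \]
   Context: For a polynomial $P\in\mathbb{Z}[x]$, $\|P\|$ denotes the largest absolute value of its coefficients. For $\xi\in\mathbb{R}$ and an integer $k\ge 1$, $\omega_k(\xi)$ is the supremum of all $\omega\in\mathbb{R}$ for which there exist infinitely many non-zero polynomials $P\in\mathbb{Z}[x]$ of degree at most $k$ with $|P(\xi)|\le\|P\|^{-\omega}$. For an integer $n\ge1$, $\lambda_n(\xi)$ is the supremum of all $\lambda\in\mathbb{R}$ for which there exist infinitely many non-zero points $\mathbf{x}=(x_0,\dots,x_n)\in\mathbb{Z}^{n+1}$ such that $\max_{1\le m\le n}|x_0\xi^m-x_m|\le\|\mathbf{x}\|^{-\lambda}$, where $\|\mathbf{x}\|$ is the maximum norm of $\mathbf{x}$. *)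

theory Defs
  imports "HOL-Analysis.Analysis" "HOL-Computational_Algebra.Polynomial"
begin

definition poly_height :: "int poly \<Rightarrow> int" where
  "poly_height P = Max (insert 0 {\<bar>coeff P i\<bar> | i. i \<le> degree P})"

definition omega_exp :: "nat \<Rightarrow> real \<Rightarrow> ereal" where
  "omega_exp k \<xi> = Sup (ereal ` {\<omega>::real. infinite {P::int poly. P \<noteq> 0 \<and> degree P \<le> k \<and>
      \<bar>poly (map_poly of_int P) \<xi>\<bar> \<le> real_of_int (poly_height P) powr (-\<omega>)}})"

text \<open>Maximum norm of an integer point (x_0,...,x_n), represented as a function nat => int
  vanishing above n.\<close>
definition pt_norm :: "nat \<Rightarrow> (nat \<Rightarrow> int) \<Rightarrow> int" where
  "pt_norm n x = Max {\<bar>x i\<bar> | i. i \<le> n}"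

definition lambda_exp :: "nat \<Rightarrow> real \<Rightarrow> ereal" where
  "lambda_exp n \<xi> = Sup (ereal ` {l::real. infinite {x::nat \<Rightarrow> int.
      (\<forall>i>n. x i = 0) \<and> x \<noteq> (\<lambda>_. 0) \<and>
      (\<forall>m\<in>{1..n}. \<bar>real_of_int (x 0) * \<xi> ^ m - real_of_int (x m)\<bar>
          \<le> real_of_int (pt_norm n x) powr (-l))}})"

end

(* Let P be an integer polynomial of degree at most k and height H with |P(xi)| <= H^(-omega).
   Translating by an integer t in {0..k} at which |P| is maximal on {0..k}, the constant
   coefficient c = P(t) of R(X) = P(X + t) is comparable to H and dominates all coefficients of R.
   A pigeonhole argument gives integers y_0, ..., y_n with 0 < |y_n| <= N^(k-1) |c|^(n-k+1) that
   satisfy the linear recurrence with characteristic polynomial R on their first n - k + 1 terms,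
   while their last k - 1 terms lie within 1/N of y_n eta^(m-n), where eta = xi - t. Solving the
   recurrence backwards keeps all errors y_n eta^(m-n) - y_m of order 1/N + |y_n| |R(eta)| / |c|,
   and the binomial transform turns (y_m) into an integer point approximating (1, xi, ..., xi^n).
   With N about H^b, b = (omega - n + k)/k, this point has norm about H^a, a = ((k-1) omega + n)/k,
   and approximation error about H^(-b); hence lambda_n(xi) >= b/a, and letting omega tend to
   omega_k(xi) gives the theorem. *)

theory Submission
  imports Defs
begin

section \<open>Heights of integer polynomials\<close>

lemma abs_coeff_le_poly_height: "\<bar>coeff P i\<bar> \<le> poly_height P"
proof (cases "i \<le> degree P")
  case True
  then show ?thesis unfolding poly_height_def by (intro Max_ge) auto
next
  case False
  then have "coeff P i = 0" by (simp add: coeff_eq_0)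
  moreover have "0 \<le> poly_height P" unfolding poly_height_def by (intro Max_ge) auto
  ultimately show ?thesis by simp
qed

lemma poly_height_nonneg: "0 \<le> poly_height P"
  using abs_coeff_le_poly_height[of P 0] by linarith

lemma poly_height_ge_1: "P \<noteq> 0 \<Longrightarrow> 1 \<le> poly_height P"
proof -
  assume "P \<noteq> 0"
  then have "lead_coeff P \<noteq> 0" by simp
  then have "1 \<le> \<bar>lead_coeff P\<bar>" by linarith
  then show ?thesis using abs_coeff_le_poly_height[of P "degree P"] by linarith
qed

lemma poly_height_attained: "\<exists>i. poly_height P = \<bar>coeff P i\<bar>"
proof -
  have "poly_height P \<in> insert 0 {\<bar>coeff P i\<bar> | i. i \<le> degree P}"
    unfolding poly_height_def by (intro Max_in) auto
  then show ?thesis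
  proof
    assume "poly_height P = 0"
    then show ?thesis by (intro exI[of _ "Suc (degree P)"]) (simp add: coeff_eq_0)
  qed auto
qed

lemma finite_polys_bounded_height: "finite {P :: int poly. degree P \<le> k \<and> poly_height P \<le> B}"
proof -
  let ?S = "{P :: int poly. degree P \<le> k \<and> poly_height P \<le> B}"
  let ?coeffs = "\<lambda>P::int poly. map (coeff P) [0..<Suc k]"
  have "inj_on ?coeffs ?S"
  proof (rule inj_onI, rule poly_eqI)
    fix P Q i assume "P \<in> ?S" "Q \<in> ?S" "?coeffs P = ?coeffs Q"
    then show "coeff P i = coeff Q i"
      by (cases "i \<le> k") (auto simp: coeff_eq_0)
  qed
  have "coeff P i \<in> {-B..B}" if "P \<in> ?S" for P i
    using that abs_coeff_le_poly_height[of P i] by auto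
  then have "?coeffs ` ?S \<subseteq> {xs. set xs \<subseteq> {-B..B} \<and> length xs = Suc k}" by auto
  then have "finite (?coeffs ` ?S)"
    by (rule finite_subset) (intro finite_lists_length_eq, simp)
  with \<open>inj_on ?coeffs ?S\<close> show ?thesis using finite_image_iff by blast
qed

lemma poly_map_poly_of_int_sum:
  assumes "degree P \<le> k"
  shows "poly (map_poly real_of_int P) x = (\<Sum>i\<le>k. real_of_int (coeff P i) * x ^ i)"
  using assms by (simp add: poly_altdef degree_map_poly coeff_map_poly
      sum.mono_neutral_left[of "{..k}" "{..degree P}"] coeff_eq_0)

section \<open>Coefficients from the values at the nodes 0, ..., k\<close>

definition lagrange_basis :: "nat \<Rightarrow> nat \<Rightarrow> real poly" where
  "lagrange_basis k t =
     smult (inverse (\<Prod>u\<in>{0..k}-{t}. real t - real u)) (\<Prod>u\<in>{0..k}-{t}. [:- real u, 1:])"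

lemma degree_lagrange_basis: "t \<le> k \<Longrightarrow> degree (lagrange_basis k t) \<le> k"
proof -
  assume "t \<le> k"
  have "degree (\<Prod>u\<in>{0..k}-{t}. [:- real u, 1:]) \<le> (\<Sum>u\<in>{0..k}-{t}. degree [:- real u, 1:])"
    using degree_prod_sum_le[of "{0..k}-{t}" "\<lambda>u. [:- real u, 1:]"] by (simp add: o_def)
  also have "\<dots> \<le> k" using \<open>t \<le> k\<close> by simp
  finally show ?thesis unfolding lagrange_basis_def using degree_smult_le order_trans by blast
qed

lemma poly_lagrange_basis:
  "t \<le> k \<Longrightarrow> s \<le> k \<Longrightarrow> poly (lagrange_basis k t) (real s) = (if s = t then 1 else 0)"
  by (auto simp: lagrange_basis_def poly_prod prod_zero_iff)

lemma lagrange_interpolation: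
  assumes "degree p \<le> k"
  shows "p = (\<Sum>t\<le>k. smult (poly p (real t)) (lagrange_basis k t))"
proof (rule poly_eqI_degree[of "real ` {..k}"])
  fix x assume "x \<in> real ` {..k}"
  then obtain s where "s \<le> k" "x = real s" by auto
  then show "poly p x = poly (\<Sum>t\<le>k. smult (poly p (real t)) (lagrange_basis k t)) x"
    by (simp add: poly_sum poly_lagrange_basis if_distrib sum.delta cong: if_cong)
next
  have card: "card (real ` {..k}) = Suc k" by (simp add: card_image)
  then show "degree p < card (real ` {..k})" using assms by simp
  have "degree (\<Sum>t\<le>k. smult (poly p (real t)) (lagrange_basis k t)) \<le> k"
    by (intro degree_sum_le) (auto intro: order_trans[OF degree_smult_le] degree_lagrange_basis)
  then show "degree (\<Sum>t\<le>k. smult (poly p (real t)) (lagrange_basis k t)) < card (real ` {..k})"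
    using card by simp
qed

lemma coeff_bounded_by_values_at_nodes:
  obtains C :: real where "C > 0"
    "\<And>p i M. degree p \<le> k \<Longrightarrow> (\<And>u. u \<le> k \<Longrightarrow> \<bar>poly p (real u)\<bar> \<le> M) \<Longrightarrow> \<bar>coeff p i\<bar> \<le> C * M"
proof
  define C where "C = 1 + (\<Sum>t\<le>k. \<Sum>j\<le>k. \<bar>coeff (lagrange_basis k t) j\<bar>)"
  show "C > 0" unfolding C_def by (simp add: sum_nonneg add_pos_nonneg)
  fix p i M assume deg: "degree p \<le> k" and M: "\<And>u. u \<le> k \<Longrightarrow> \<bar>poly p (real u)\<bar> \<le> M"
  have "M \<ge> 0" using M[of 0] by simp
  show "\<bar>coeff p i\<bar> \<le> C * M"
  proof (cases "i \<le> k")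
    case False
    then show ?thesis using deg \<open>M \<ge> 0\<close> \<open>C > 0\<close> by (simp add: coeff_eq_0)
  next
    case True
    have "\<bar>coeff p i\<bar> = \<bar>\<Sum>t\<le>k. poly p (real t) * coeff (lagrange_basis k t) i\<bar>"
      by (subst lagrange_interpolation[OF deg]) (simp add: coeff_sum)
    also have "\<dots> \<le> (\<Sum>t\<le>k. M * \<bar>coeff (lagrange_basis k t) i\<bar>)"
      by (rule order_trans[OF sum_abs], rule sum_mono) (auto simp: abs_mult intro!: mult_right_mono M)
    also have "\<dots> \<le> M * (\<Sum>t\<le>k. \<Sum>j\<le>k. \<bar>coeff (lagrange_basis k t) j\<bar>)"
      unfolding sum_distrib_left[symmetric] using True \<open>M \<ge> 0\<close>
      by (intro mult_left_mono sum_mono member_le_sum) auto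
    also have "\<dots> \<le> C * M" unfolding C_def using \<open>M \<ge> 0\<close> by (simp add: algebra_simps)
    finally show ?thesis .
  qed
qed

lemma poly_map_poly_of_int_of_int:
  "poly (map_poly (of_int :: int \<Rightarrow> 'a :: comm_ring_1) P) (of_int z) = of_int (poly P z)"
  by (induction P) (simp_all add: map_poly_pCons)

lemma poly_map_poly_of_int_shift:
  "poly (map_poly (of_int :: int \<Rightarrow> 'a :: comm_ring_1) (pcompose P [:t, 1:])) x =
     poly (map_poly of_int P) (x + of_int t)"
proof (induction P)
  case (pCons a P)
  have "map_poly (of_int :: int \<Rightarrow> 'a) (pcompose (pCons a P) [:t, 1:]) =
          [:of_int a:] + [:of_int t, 1:] * map_poly of_int (pcompose P [:t, 1:])"
    by (rule poly_eqI) (simp add: pcompose_pCons coeff_map_poly coeff_mult coeff_pCons split: nat.split)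
  then show ?case using pCons by (simp add: map_poly_pCons algebra_simps)
qed simp

lemma abs_poly_le_poly_height:
  assumes "degree P \<le> k" "0 \<le> v"
  shows "\<bar>poly (map_poly real_of_int P) v\<bar> \<le> (real k + 1) * poly_height P * (1 + v) ^ k"
proof -
  have "\<bar>poly (map_poly real_of_int P) v\<bar> \<le> (\<Sum>i\<le>k. \<bar>real_of_int (coeff P i)\<bar> * v ^ i)"
    unfolding poly_map_poly_of_int_sum[OF assms(1)]
    by (rule order_trans[OF sum_abs]) (simp add: abs_mult assms(2))
  also have "\<dots> \<le> (\<Sum>i\<le>k. real_of_int (poly_height P) * (1 + v) ^ k)"
  proof (rule sum_mono, rule mult_mono)
    fix i assume "i \<in> {..k}"
    have "v ^ i \<le> (1 + v) ^ i" using assms(2) by (intro power_mono) auto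
    also have "\<dots> \<le> (1 + v) ^ k" using \<open>i \<in> {..k}\<close> assms(2) by (intro power_increasing) auto
    finally show "v ^ i \<le> (1 + v) ^ k" .
  qed (use abs_coeff_le_poly_height poly_height_nonneg assms(2) in \<open>auto simp flip: of_int_abs\<close>)
  finally show ?thesis by (simp add: mult_ac add.commute)
qed

lemma shifted_poly_bounds:
  obtains C :: real where "C \<ge> 1"
    "\<And>P t. degree P \<le> k \<Longrightarrow> t \<le> k \<Longrightarrow> (\<And>u. u \<le> k \<Longrightarrow> \<bar>poly P (int u)\<bar> \<le> \<bar>poly P (int t)\<bar>) \<Longrightarrow>
       poly_height P \<le> C * \<bar>real_of_int (poly P (int t))\<bar> \<and>
       \<bar>real_of_int (poly P (int t))\<bar> \<le> C * poly_height P \<and>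
       (\<forall>i. \<bar>real_of_int (coeff (pcompose P [:int t, 1:]) i)\<bar> \<le> C * \<bar>real_of_int (poly P (int t))\<bar>)"
proof -
  obtain L where "L > 0" and L: "\<And>p i M. degree p \<le> k \<Longrightarrow>
      (\<And>u. u \<le> k \<Longrightarrow> \<bar>poly p (real u)\<bar> \<le> M) \<Longrightarrow> \<bar>coeff p i\<bar> \<le> L * M"
    using coeff_bounded_by_values_at_nodes by blast
  define B where "B = (real k + 1) * (1 + 2 * real k) ^ k"
  have "B \<ge> 1" unfolding B_def by (intro mult_ge1_I) (simp_all add: one_le_power)
  define C where "C = (1 + L) ^ 2 * B"
  have "1 \<le> (1 + L) ^ 2" "L \<le> (1 + L) ^ 2" "L * L \<le> (1 + L) ^ 2"
    using \<open>L > 0\<close> by (simp_all add: power2_eq_square algebra_simps)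
  then have "B \<le> C" "L \<le> C" "L * B * L \<le> C"
    unfolding C_def using \<open>B \<ge> 1\<close> mult_right_mono[of _ _ B] mult_left_mono[of 1 B "(1 + L) ^ 2"]
    by (force simp: mult_ac)+
  have coeff_le: "\<bar>coeff Q i\<bar> \<le> L * M"
    if "degree Q \<le> k" "\<And>u. u \<le> k \<Longrightarrow> \<bar>poly Q (int u)\<bar> \<le> M" for Q :: "int poly" and i and M :: real
    using L[of "map_poly of_int Q" M i] that
    by (simp add: degree_map_poly coeff_map_poly poly_map_poly_of_int_of_int[where z = "int _", simplified]
        flip: of_int_abs)
  have value_le: "\<bar>poly P (int u)\<bar> \<le> B * poly_height P" if "degree P \<le> k" "u \<le> 2 * k" for P u
  proof -
    have "\<bar>poly (map_poly real_of_int P) (real u)\<bar> \<le> (real k + 1) * poly_height P * (1 + real u) ^ k"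
      using that by (intro abs_poly_le_poly_height) auto
    also have "\<dots> \<le> B * poly_height P"
      unfolding B_def using that poly_height_nonneg[of P]
      by (simp add: mult_ac mult_left_mono power_mono)
    finally show ?thesis by (simp add: poly_map_poly_of_int_of_int[where z = "int _", simplified])
  qed
  show ?thesis
  proof (rule that[of C])
    show "1 \<le> C" using \<open>B \<le> C\<close> \<open>B \<ge> 1\<close> by linarith
  next
    fix P t assume deg: "degree P \<le> k" and "t \<le> k"
      and max: "\<And>u. u \<le> k \<Longrightarrow> \<bar>poly P (int u)\<bar> \<le> \<bar>poly P (int t)\<bar>"
    let ?c = "\<bar>real_of_int (poly P (int t))\<bar>"
    obtain i where "poly_height P = \<bar>coeff P i\<bar>" using poly_height_attained by blast
    moreover have "\<bar>coeff P i\<bar> \<le> L * ?c"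
      by (rule coeff_le[OF deg]) (use max in \<open>simp flip: of_int_abs\<close>)
    ultimately have height_le: "poly_height P \<le> L * ?c" by simp
    also have "\<dots> \<le> C * ?c" using \<open>L \<le> C\<close> by (simp add: mult_right_mono)
    finally have "poly_height P \<le> C * ?c" .
    moreover have "?c \<le> B * poly_height P" using value_le[OF deg, of t] \<open>t \<le> k\<close> by simp
    then have "?c \<le> C * poly_height P"
      using \<open>B \<le> C\<close> poly_height_nonneg[of P] by (meson mult_right_mono of_int_0_le_iff order_trans)
    moreover have "\<bar>real_of_int (coeff (pcompose P [:int t, 1:]) j)\<bar> \<le> C * ?c" for j
    proof -
      have "degree (pcompose P [:int t, 1:]) \<le> k" using degree_pcompose_le[of P "[:int t, 1:]"] deg by simp
      moreover have "\<bar>poly (pcompose P [:int t, 1:]) (int u)\<bar> \<le> B * poly_height P" if "u \<le> k" for u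
        using value_le[OF deg, of "u + t"] that \<open>t \<le> k\<close> by (simp add: poly_pcompose add.commute)
      ultimately have "\<bar>coeff (pcompose P [:int t, 1:]) j\<bar> \<le> L * (B * poly_height P)" by (rule coeff_le)
      also have "\<dots> \<le> L * B * (L * ?c)"
        using height_le \<open>L > 0\<close> \<open>B \<ge> 1\<close> by (simp add: mult.assoc mult_left_mono)
      also have "\<dots> = (L * B * L) * ?c" by (simp only: mult.assoc)
      also have "\<dots> \<le> C * ?c" using \<open>L * B * L \<le> C\<close> by (simp add: mult_right_mono)
      finally show ?thesis by simp
    qed
    ultimately show "poly_height P \<le> C * ?c \<and> ?c \<le> C * poly_height P \<and>
        (\<forall>j. \<bar>real_of_int (coeff (pcompose P [:int t, 1:]) j)\<bar> \<le> C * ?c)" by blast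
  qed
qed

section \<open>Integer solutions of the recurrence of a polynomial\<close>

lemma backward_recurrence_bound:
  fixes e :: "nat \<Rightarrow> real" and B G :: real
  assumes "1 \<le> k" "k \<le> n" "0 \<le> B" "0 \<le> G"
    and tail: "\<And>m. n - k < m \<Longrightarrow> m \<le> n \<Longrightarrow> \<bar>e m\<bar> \<le> G"
    and step: "\<And>s. s \<le> n - k \<Longrightarrow> \<bar>e s\<bar> \<le> G + B * (\<Sum>i=1..k. \<bar>e (i + s)\<bar>)"
  shows "m \<le> n \<Longrightarrow> \<bar>e m\<bar> \<le> (1 + k * B) ^ (n - m) * G"
proof (induction "n - m" arbitrary: m rule: less_induct)
  case less
  have "1 \<le> 1 + k * B" using assms(3) by simp
  show ?case
  proof (cases "n - k < m")
    case True
    then have "\<bar>e m\<bar> \<le> 1 * G" using tail less.prems by simp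
    also have "\<dots> \<le> (1 + k * B) ^ (n - m) * G"
      using \<open>1 \<le> 1 + k * B\<close> assms(4) by (intro mult_right_mono one_le_power) auto
    finally show ?thesis .
  next
    case False
    let ?b = "(1 + k * B) ^ (n - m - 1) * G"
    have each: "\<bar>e (i + m)\<bar> \<le> ?b" if "i \<in> {1..k}" for i
    proof -
      have "\<bar>e (i + m)\<bar> \<le> (1 + k * B) ^ (n - (i + m)) * G"
        using False that assms(2) by (intro less.hyps) auto
      also have "\<dots> \<le> ?b"
        using False that \<open>1 \<le> 1 + k * B\<close> assms(4) by (intro mult_right_mono power_increasing) auto
      finally show ?thesis .
    qed
    have "(\<Sum>i=1..k. \<bar>e (i + m)\<bar>) \<le> (\<Sum>i=1..k. ?b)" by (rule sum_mono) (rule each)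
    then have "(\<Sum>i=1..k. \<bar>e (i + m)\<bar>) \<le> k * ?b" by simp
    then have "G + B * (\<Sum>i=1..k. \<bar>e (i + m)\<bar>) \<le> G + B * (k * ?b)"
      using assms(3) by (simp add: mult_left_mono)
    then have "\<bar>e m\<bar> \<le> G + B * (k * ?b)" using step[of m] False by simp
    also have "\<dots> \<le> ?b + k * B * ?b"
      using mult_right_mono[OF one_le_power[OF \<open>1 \<le> 1 + k * B\<close>] assms(4), of "n - m - 1"]
      by (simp add: mult_ac)
    also have "\<dots> = (1 + k * B) ^ Suc (n - m - 1) * G" by (simp add: algebra_simps)
    also have "Suc (n - m - 1) = n - m" using False assms(1,2) by simp
    finally show ?thesis .
  qed
qed

lemma recurrence_error_step:
  fixes R :: "int poly" and y :: "nat \<Rightarrow> int" and z \<eta> A :: real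
  assumes "degree R \<le> k" "coeff R 0 \<noteq> 0"
    and A: "\<And>i. \<bar>real_of_int (coeff R i)\<bar> \<le> A * \<bar>real_of_int (coeff R 0)\<bar>"
    and rec: "(\<Sum>i\<le>k. coeff R i * y (i + s)) = 0"
  defines "e \<equiv> \<lambda>m. z * \<eta> ^ m - y m"
  shows "\<bar>e s\<bar> \<le> \<bar>z * \<eta> ^ s * poly (map_poly of_int R) \<eta>\<bar> / \<bar>real_of_int (coeff R 0)\<bar> +
    A * (\<Sum>i=1..k. \<bar>e (i + s)\<bar>)"
proof -
  define c where "c i = real_of_int (coeff R i)" for i
  have split0: "{..k} = insert 0 {1..k}" by auto
  have "(\<Sum>i\<le>k. c i * e (i + s)) = (\<Sum>i\<le>k. z * \<eta> ^ s * (c i * \<eta> ^ i)) - (\<Sum>i\<le>k. c i * y (i + s))"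
    unfolding e_def by (simp add: right_diff_distrib sum_subtractf power_add mult_ac)
  also have "(\<Sum>i\<le>k. z * \<eta> ^ s * (c i * \<eta> ^ i)) = z * \<eta> ^ s * (\<Sum>i\<le>k. c i * \<eta> ^ i)"
    by (simp add: sum_distrib_left)
  also have "(\<Sum>i\<le>k. c i * y (i + s)) = 0"
    unfolding c_def using arg_cong[OF rec, of real_of_int] by simp
  finally have "(\<Sum>i\<le>k. c i * e (i + s)) = z * \<eta> ^ s * poly (map_poly of_int R) \<eta>"
    by (simp add: poly_map_poly_of_int_sum[OF assms(1)] c_def)
  then have eq: "c 0 * e s = z * \<eta> ^ s * poly (map_poly of_int R) \<eta> - (\<Sum>i=1..k. c i * e (i + s))"
    unfolding split0 by (simp add: eq_diff_eq)
  have "\<bar>c 0\<bar> * \<bar>e s\<bar> \<le> \<bar>z * \<eta> ^ s * poly (map_poly of_int R) \<eta>\<bar> + \<bar>\<Sum>i=1..k. c i * e (i + s)\<bar>"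
    unfolding abs_mult[symmetric] eq by (rule abs_triangle_ineq4)
  also have "\<bar>\<Sum>i=1..k. c i * e (i + s)\<bar> \<le> (\<Sum>i=1..k. \<bar>c i\<bar> * \<bar>e (i + s)\<bar>)"
    by (rule order_trans[OF sum_abs]) (simp add: abs_mult)
  also have "(\<Sum>i=1..k. \<bar>c i\<bar> * \<bar>e (i + s)\<bar>) \<le> \<bar>c 0\<bar> * (A * (\<Sum>i=1..k. \<bar>e (i + s)\<bar>))"
    unfolding sum_distrib_left
  proof (rule sum_mono)
    fix i
    show "\<bar>c i\<bar> * \<bar>e (i + s)\<bar> \<le> \<bar>c 0\<bar> * (A * \<bar>e (i + s)\<bar>)"
      using mult_right_mono[OF A[of i] abs_ge_zero[of "e (i + s)"]] by (simp add: c_def mult_ac)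
  qed
  finally show ?thesis using assms(2) by (simp add: c_def field_simps)
qed

lemma abs_power_le_max_1_power:
  fixes x :: real
  assumes "m \<le> n"
  shows "\<bar>x\<bar> ^ m \<le> max 1 \<bar>x\<bar> ^ n"
proof -
  have "\<bar>x\<bar> ^ m \<le> max 1 \<bar>x\<bar> ^ m" by (intro power_mono) auto
  also have "\<dots> \<le> max 1 \<bar>x\<bar> ^ n" using assms by (intro power_increasing) auto
  finally show ?thesis .
qed

lemma recurrence_solution_error:
  fixes R :: "int poly" and y :: "nat \<Rightarrow> int" and z \<eta> A E :: real
  assumes "1 \<le> k" "k \<le> n" "degree R \<le> k" "coeff R 0 \<noteq> 0" "0 \<le> E"
    and A: "\<And>i. \<bar>real_of_int (coeff R i)\<bar> \<le> A * \<bar>real_of_int (coeff R 0)\<bar>"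
    and rec: "\<And>s. s \<le> n - k \<Longrightarrow> (\<Sum>i\<le>k. coeff R i * y (i + s)) = 0"
    and tail: "\<And>m. n - k < m \<Longrightarrow> m \<le> n \<Longrightarrow> \<bar>z * \<eta> ^ m - y m\<bar> \<le> E"
    and "m \<le> n"
  shows "\<bar>z * \<eta> ^ m - y m\<bar> \<le> (1 + k * A) ^ (n - m) *
    (E + \<bar>z\<bar> * max 1 \<bar>\<eta>\<bar> ^ n * \<bar>poly (map_poly of_int R) \<eta>\<bar> / \<bar>real_of_int (coeff R 0)\<bar>)"
proof -
  let ?G = "E + \<bar>z\<bar> * max 1 \<bar>\<eta>\<bar> ^ n * \<bar>poly (map_poly of_int R) \<eta>\<bar> / \<bar>real_of_int (coeff R 0)\<bar>"
  have "A \<ge> 0" using A[of 0] assms(4) by (simp add: zero_le_mult_iff)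
  show ?thesis
  proof (rule backward_recurrence_bound[OF assms(1,2) \<open>A \<ge> 0\<close> _ _ _ \<open>m \<le> n\<close>])
    show "0 \<le> ?G" using assms(5) by simp
    show "\<bar>z * \<eta> ^ m - y m\<bar> \<le> ?G" if "n - k < m" "m \<le> n" for m
      using tail[OF that] by (intro add_increasing2) auto
    show "\<bar>z * \<eta> ^ s - y s\<bar> \<le> ?G + A * (\<Sum>i=1..k. \<bar>z * \<eta> ^ (i + s) - y (i + s)\<bar>)" if "s \<le> n - k" for s
    proof -
      have "\<bar>\<eta>\<bar> ^ s \<le> max 1 \<bar>\<eta>\<bar> ^ n" using that by (intro abs_power_le_max_1_power) simp
      then have "\<bar>z * \<eta> ^ s * poly (map_poly of_int R) \<eta>\<bar> / \<bar>real_of_int (coeff R 0)\<bar> \<le>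
          \<bar>z\<bar> * max 1 \<bar>\<eta>\<bar> ^ n * \<bar>poly (map_poly of_int R) \<eta>\<bar> / \<bar>real_of_int (coeff R 0)\<bar>"
        unfolding abs_mult power_abs by (simp add: divide_right_mono mult_left_mono mult_right_mono)
      then show ?thesis
        using recurrence_error_step[OF assms(3,4) A rec[OF that], of z \<eta>] assms(5) by linarith
    qed
  qed
qed

lemma approximation_of_scaled_powers:
  fixes z \<eta> B :: real and y :: "nat \<Rightarrow> real"
  assumes "\<And>m. m \<le> n \<Longrightarrow> \<bar>z * \<eta> ^ m - y m\<bar> \<le> B" "m \<le> n"
  shows "\<bar>y 0 * \<eta> ^ m - y m\<bar> \<le> (1 + max 1 \<bar>\<eta>\<bar> ^ n) * B" "\<bar>y m\<bar> \<le> \<bar>z\<bar> * max 1 \<bar>\<eta>\<bar> ^ n + B"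
proof -
  have pow: "\<bar>\<eta> ^ m\<bar> \<le> max 1 \<bar>\<eta>\<bar> ^ n" unfolding power_abs using assms(2) by (rule abs_power_le_max_1_power)
  have "\<bar>z - y 0\<bar> \<le> B" using assms(1)[of 0] by simp
  have "y 0 * \<eta> ^ m - y m = (z * \<eta> ^ m - y m) - (z - y 0) * \<eta> ^ m" by (simp add: algebra_simps)
  also have "\<bar>\<dots>\<bar> \<le> \<bar>z * \<eta> ^ m - y m\<bar> + \<bar>z - y 0\<bar> * \<bar>\<eta> ^ m\<bar>"
    unfolding abs_mult[symmetric] by (rule abs_triangle_ineq4)
  also have "\<dots> \<le> B + B * max 1 \<bar>\<eta>\<bar> ^ n"
    using assms \<open>\<bar>z - y 0\<bar> \<le> B\<close> pow by (intro add_mono mult_mono) auto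
  finally show "\<bar>y 0 * \<eta> ^ m - y m\<bar> \<le> (1 + max 1 \<bar>\<eta>\<bar> ^ n) * B" by (simp add: algebra_simps)
  have "\<bar>z * \<eta> ^ m\<bar> \<le> \<bar>z\<bar> * max 1 \<bar>\<eta>\<bar> ^ n" unfolding abs_mult using pow by (simp add: mult_left_mono)
  moreover have "\<bar>y m\<bar> \<le> \<bar>z * \<eta> ^ m\<bar> + \<bar>z * \<eta> ^ m - y m\<bar>" by linarith
  ultimately show "\<bar>y m\<bar> \<le> \<bar>z\<bar> * max 1 \<bar>\<eta>\<bar> ^ n + B" using assms by fastforce
qed

lemma exists_recurrence_residues_in_range:
  fixes R :: "int poly" and f :: "nat \<Rightarrow> int"
  assumes "coeff R 0 \<noteq> 0"
  shows "\<exists>v. (\<forall>m>n-k. v m = f m) \<and> (\<forall>s\<le>n-k. (\<Sum>i\<le>k. coeff R i * v (i + s)) \<in> {0..<\<bar>coeff R 0\<bar>})"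
proof -
  define c where "c = coeff R 0"
  have "\<exists>v. (\<forall>m>n-k. v m = f m) \<and> (\<forall>s. a \<le> s \<and> s \<le> n-k \<longrightarrow> (\<Sum>i\<le>k. coeff R i * v (i + s)) \<in> {0..<\<bar>c\<bar>})"
    if "a \<le> Suc (n-k)" for a
    using that
  proof (induction "Suc (n-k) - a" arbitrary: a)
    case 0
    then show ?case by (intro exI[of _ f]) auto
  next
    case (Suc d)
    then have "a \<le> n-k" "d = Suc (n-k) - Suc a" by auto
    then obtain v where v_tail: "\<forall>m>n-k. v m = f m"
      and v_res: "\<forall>s. Suc a \<le> s \<and> s \<le> n-k \<longrightarrow> (\<Sum>i\<le>k. coeff R i * v (i + s)) \<in> {0..<\<bar>c\<bar>}"
      using Suc.hyps(1)[of "Suc a"] by auto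
    \<comment> \<open>of the residues at \<open>s \<ge> a\<close> only the one at \<open>a\<close> involves \<open>v a\<close>, with coefficient \<open>c \<noteq> 0\<close>;
        division with remainder by \<open>\<bar>c\<bar>\<close> puts it into range\<close>
    define W where "W = (\<Sum>i=1..k. coeff R i * v (i + a))"
    define v' where "v' = v(a := - sgn c * (W div \<bar>c\<bar>))"
    have "(\<Sum>i\<le>k. coeff R i * v' (i + s)) \<in> {0..<\<bar>c\<bar>}" if "a \<le> s" "s \<le> n-k" for s
    proof (cases "s = a")
      case False
      then have "(\<Sum>i\<le>k. coeff R i * v' (i + s)) = (\<Sum>i\<le>k. coeff R i * v (i + s))"
        using that by (intro sum.cong) (auto simp: v'_def)
      then show ?thesis using v_res that False by auto
    next
      case True
      have "{..k} = insert 0 {1..k}" by auto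
      then have "(\<Sum>i\<le>k. coeff R i * v' (i + s)) = c * v' a + (\<Sum>i=1..k. coeff R i * v' (i + a))"
        using True by (simp add: c_def)
      also have "(\<Sum>i=1..k. coeff R i * v' (i + a)) = W"
        unfolding W_def by (intro sum.cong) (auto simp: v'_def)
      also have "c * v' a = - (\<bar>c\<bar> * (W div \<bar>c\<bar>))"
        by (cases "c > 0") (auto simp: v'_def sgn_if)
      also have "- (\<bar>c\<bar> * (W div \<bar>c\<bar>)) + W = W mod \<bar>c\<bar>"
        by (simp add: minus_div_mult_eq_mod[symmetric] mult.commute)
      finally show ?thesis using assms by (simp add: c_def)
    qed
    moreover have "\<forall>m>n-k. v' m = f m" using v_tail \<open>a \<le> n-k\<close> by (auto simp: v'_def)
    ultimately show ?case by blast
  qed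
  from this[of 0] show ?thesis by (simp add: c_def)
qed

lemma pigeonhole_recurrence_solution:
  fixes \<eta> :: real and R :: "int poly" and N :: nat
  assumes "\<eta> \<noteq> 0" "1 \<le> k" "k \<le> n" "coeff R 0 \<noteq> 0" "1 \<le> N"
  shows "\<exists>y::nat \<Rightarrow> int. y n \<noteq> 0 \<and> \<bar>y n\<bar> \<le> int N ^ (k - 1) * \<bar>coeff R 0\<bar> ^ Suc (n - k) \<and>
     (\<forall>s\<le>n-k. (\<Sum>i\<le>k. coeff R i * y (i + s)) = 0) \<and>
     (\<forall>m. n - k < m \<longrightarrow> m \<le> n \<longrightarrow> \<bar>y n / \<eta> ^ n * \<eta> ^ m - y m\<bar> \<le> 1 / N)"
proof -
  define c where "c = coeff R 0"
  define Q :: nat where "Q = N ^ (k - 1) * nat \<bar>c\<bar> ^ Suc (n - k)"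
  define res where "res v s = (\<Sum>i\<le>k. coeff R i * v (i + s))" for v :: "nat \<Rightarrow> int" and s
  define good where "good q v \<longleftrightarrow> (\<forall>m>n-k. v m = \<lfloor>real q * \<eta> ^ m / \<eta> ^ n\<rfloor>) \<and>
     (\<forall>s\<le>n-k. res v s \<in> {0..<\<bar>c\<bar>})" for q :: nat and v
  have "\<exists>v. good q v" for q
    using exists_recurrence_residues_in_range[OF assms(4), of n k "\<lambda>m. \<lfloor>real q * \<eta> ^ m / \<eta> ^ n\<rfloor>"]
    unfolding good_def res_def c_def by blast
  then obtain V where V: "\<And>q. good q (V q)" by metis
  have V_tail: "V q m = \<lfloor>real q * \<eta> ^ m / \<eta> ^ n\<rfloor>" if "n - k < m" for q m
    using V[of q] that unfolding good_def by auto
  have V_n: "V q n = int q" for q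
    using V_tail[of n q] assms(1-3) by simp
  \<comment> \<open>the fingerprint of \<open>q\<close>: the boxes of width \<open>1/N\<close> containing the fractional parts of the
      last \<open>k - 1\<close> prescribed terms, and the \<open>n - k + 1\<close> residues; it takes at most \<open>Q\<close> values on
      the \<open>Q + 1\<close> integers \<open>0..Q\<close>, and the difference of two colliding sequences is \<open>y\<close>\<close>
  define fp where "fp q = (map (\<lambda>m. \<lfloor>real N * (real q * \<eta> ^ m / \<eta> ^ n - V q m)\<rfloor>) [Suc (n - k)..<n],
      map (res (V q)) [0..<Suc (n - k)])" for q
  define L1 where "L1 = {xs. set xs \<subseteq> {0..<int N} \<and> length xs = k - 1}"
  define L2 where "L2 = {xs. set xs \<subseteq> {0..<\<bar>c\<bar>} \<and> length xs = Suc (n - k)}"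
  have box: "\<lfloor>real N * (real q * \<eta> ^ m / \<eta> ^ n - V q m)\<rfloor> \<in> {0..<int N}" if "n - k < m" for q m
  proof -
    define x where "x = real q * \<eta> ^ m / \<eta> ^ n"
    have "0 \<le> x - \<lfloor>x\<rfloor>" "x - \<lfloor>x\<rfloor> < 1" by linarith+
    then have "0 \<le> real N * (x - \<lfloor>x\<rfloor>)" "real N * (x - \<lfloor>x\<rfloor>) < real N" using assms(5) by auto
    then show ?thesis unfolding V_tail[OF that] x_def[symmetric] by (simp add: floor_less_iff)
  qed
  have "fp q \<in> L1 \<times> L2" for q
  proof -
    have "fst (fp q) \<in> L1" using box assms(2,3) unfolding fp_def L1_def by auto
    moreover have "snd (fp q) \<in> L2" using V[of q] unfolding fp_def L2_def good_def by auto
    ultimately show ?thesis by (simp add: mem_Times_iff)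
  qed
  then have "fp ` {0..Q} \<subseteq> L1 \<times> L2" by blast
  moreover have "finite (L1 \<times> L2)" unfolding L1_def L2_def
    by (intro finite_cartesian_product finite_lists_length_eq) auto
  moreover have "card (L1 \<times> L2) = Q"
    unfolding L1_def L2_def Q_def card_cartesian_product card_lists_length_eq[OF finite_atLeastLessThan_int]
    by simp
  ultimately have "card (fp ` {0..Q}) \<le> Q" by (metis card_mono)
  then have "\<not> inj_on fp {0..Q}" by (intro pigeonhole) simp
  then obtain q q' where qq: "q \<le> Q" "q' \<le> Q" "q \<noteq> q'" "fp q = fp q'"
    unfolding inj_on_def by auto
  define y where "y m = V q m - V q' m" for m
  have y_n: "y n = int q - int q'" unfolding y_def V_n ..
  have y_bound: "\<bar>y n\<bar> \<le> int N ^ (k - 1) * \<bar>c\<bar> ^ Suc (n - k)"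
  proof -
    have "\<bar>y n\<bar> \<le> int Q" using qq(1,2) unfolding y_n by linarith
    also have "int Q = int N ^ (k - 1) * \<bar>c\<bar> ^ Suc (n - k)" unfolding Q_def by simp
    finally show ?thesis .
  qed
  have y_rec: "(\<Sum>i\<le>k. coeff R i * y (i + s)) = 0" if "s \<le> n - k" for s
  proof -
    have "res (V q) s = res (V q') s"
      using arg_cong[OF qq(4), of "\<lambda>p. snd p ! s"] that
      by (simp add: fp_def nth_map less_Suc_eq_le del: upt_Suc)
    then show ?thesis unfolding y_def res_def by (simp add: right_diff_distrib sum_subtractf)
  qed
  have y_tail: "\<bar>y n / \<eta> ^ n * \<eta> ^ m - y m\<bar> \<le> 1 / N" if m: "n - k < m" "m \<le> n" for m
  proof (cases "m = n")
    case True
    then show ?thesis using assms(1) by simp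
  next
    case False
    define d where "d p = real p * \<eta> ^ m / \<eta> ^ n - V p m" for p
    have "[Suc (n - k)..<n] ! (m - Suc (n - k)) = m" "m - Suc (n - k) < length [Suc (n - k)..<n]"
      using m False by auto
    then have "\<lfloor>real N * d q\<rfloor> = \<lfloor>real N * d q'\<rfloor>"
      using arg_cong[OF qq(4), of "\<lambda>p. fst p ! (m - Suc (n - k))"] unfolding fp_def d_def by simp
    then have "\<bar>real N * d q - real N * d q'\<bar> < 1" by linarith
    then have "real N * \<bar>d q - d q'\<bar> < 1" by (simp add: right_diff_distrib[symmetric] abs_mult)
    then have "\<bar>d q - d q'\<bar> \<le> 1 / N" using assms(5) by (simp add: field_simps)
    moreover have "y n / \<eta> ^ n * \<eta> ^ m - y m = d q - d q'"
      unfolding y_def d_def by (simp add: V_n diff_divide_distrib algebra_simps)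
    ultimately show ?thesis by simp
  qed
  show ?thesis
    using y_n qq(3) y_bound y_rec y_tail unfolding c_def by (intro exI[of _ y]) auto
qed

lemma approximation_by_recurrence_solutions:
  fixes \<eta> A :: real
  assumes "\<eta> \<noteq> 0" "1 \<le> k" "k \<le> n"
  obtains K :: real where "K \<ge> 1"
    "\<And>R N. degree R \<le> k \<Longrightarrow> coeff R 0 \<noteq> 0 \<Longrightarrow>
      (\<And>i. \<bar>real_of_int (coeff R i)\<bar> \<le> A * \<bar>real_of_int (coeff R 0)\<bar>) \<Longrightarrow> 1 \<le> N \<Longrightarrow>
      \<exists>y. y n \<noteq> 0 \<and> \<bar>y n\<bar> \<le> int N ^ (k - 1) * \<bar>coeff R 0\<bar> ^ Suc (n - k) \<and>
        (\<forall>m\<le>n. \<bar>real_of_int (y 0) * \<eta> ^ m - real_of_int (y m)\<bar> \<le> K * (1 / real N +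
           \<bar>real_of_int (y n)\<bar> * \<bar>poly (map_poly of_int R) \<eta>\<bar> / \<bar>real_of_int (coeff R 0)\<bar>)) \<and>
        (\<forall>m\<le>n. \<bar>real_of_int (y m)\<bar> \<le> K * (\<bar>real_of_int (y n)\<bar> + (1 / real N +
           \<bar>real_of_int (y n)\<bar> * \<bar>poly (map_poly of_int R) \<eta>\<bar> / \<bar>real_of_int (coeff R 0)\<bar>)))"
proof -
  define M where "M = max 1 \<bar>\<eta>\<bar> ^ n"
  define D where "D = M / \<bar>\<eta>\<bar> ^ n"
  define Y where "Y = (1 + k * \<bar>A\<bar>) ^ n * (M + 1)"
  have pow_le_M: "\<bar>\<eta>\<bar> ^ m \<le> M" if "m \<le> n" for m
    unfolding M_def using that by (rule abs_power_le_max_1_power)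
  have "M \<ge> 1" unfolding M_def by simp
  have "D \<ge> 1" unfolding D_def using pow_le_M[of n] assms(1) by simp
  have "Y \<ge> 1" unfolding Y_def using \<open>M \<ge> 1\<close> by (intro mult_ge1_I) auto
  have "D \<le> D * Y" using mult_left_mono[OF \<open>1 \<le> Y\<close>, of D] \<open>D \<ge> 1\<close> by simp
  show ?thesis
  proof (rule that[of "D * Y"])
    show "1 \<le> D * Y" using \<open>D \<ge> 1\<close> \<open>Y \<ge> 1\<close> by (rule mult_ge1_I)
  next
    fix R :: "int poly" and N :: nat
    assume deg: "degree R \<le> k" and c0: "coeff R 0 \<noteq> 0"
      and A: "\<And>i. \<bar>real_of_int (coeff R i)\<bar> \<le> A * \<bar>real_of_int (coeff R 0)\<bar>" and "1 \<le> N"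
    let ?c = "\<bar>real_of_int (coeff R 0)\<bar>" and ?P = "\<bar>poly (map_poly of_int R) \<eta>\<bar>"
    have "A \<ge> 0" using A[of 0] c0 by (simp add: zero_le_mult_iff)
    obtain y where y_n: "y n \<noteq> 0" "\<bar>y n\<bar> \<le> int N ^ (k - 1) * \<bar>coeff R 0\<bar> ^ Suc (n - k)"
      and rec: "\<forall>s\<le>n-k. (\<Sum>i\<le>k. coeff R i * y (i + s)) = 0"
      and tail: "\<forall>m. n - k < m \<longrightarrow> m \<le> n \<longrightarrow> \<bar>y n / \<eta> ^ n * \<eta> ^ m - y m\<bar> \<le> 1 / N"
      using pigeonhole_recurrence_solution[OF assms c0 \<open>1 \<le> N\<close>] by blast
    define z where "z = y n / \<eta> ^ n"
    define e where "e m = z * \<eta> ^ m - y m" for m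
    define G where "G = 1 / real N + \<bar>real_of_int (y n)\<bar> * ?P / ?c"
    have "G \<ge> 0" unfolding G_def by simp
    have zM: "\<bar>z\<bar> * M = \<bar>real_of_int (y n)\<bar> * D" unfolding z_def D_def by (simp add: power_abs)
    have e_bound: "\<bar>e m\<bar> \<le> (1 + k * \<bar>A\<bar>) ^ n * D * G" if "m \<le> n" for m
    proof -
      have "\<bar>e m\<bar> \<le> (1 + k * A) ^ (n - m) * (1 / real N + \<bar>z\<bar> * M * ?P / ?c)"
        unfolding e_def M_def
        by (rule recurrence_solution_error[OF assms(2,3) deg c0 _ A]) (use rec tail that in \<open>auto simp: z_def\<close>)
      also have "\<dots> \<le> (1 + k * \<bar>A\<bar>) ^ n * (D * G)"
      proof (rule mult_mono)
        show "(1 + k * A) ^ (n - m) \<le> (1 + k * \<bar>A\<bar>) ^ n"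
          unfolding abs_of_nonneg[OF \<open>A \<ge> 0\<close>] using \<open>A \<ge> 0\<close> by (intro power_increasing) auto
        show "1 / real N + \<bar>z\<bar> * M * ?P / ?c \<le> D * G"
          unfolding zM G_def using \<open>D \<ge> 1\<close> by (simp add: algebra_simps divide_right_mono)
      qed (use \<open>M \<ge> 1\<close> in auto)
      finally show ?thesis by (simp only: mult.assoc)
    qed
    have scaled: "\<bar>real_of_int (y 0) * \<eta> ^ m - real_of_int (y m)\<bar> \<le> (1 + M) * ((1 + k * \<bar>A\<bar>) ^ n * D * G)"
      "\<bar>real_of_int (y m)\<bar> \<le> \<bar>z\<bar> * M + (1 + k * \<bar>A\<bar>) ^ n * D * G" if "m \<le> n" for m
      using approximation_of_scaled_powers[of n z \<eta> "\<lambda>m. real_of_int (y m)"] e_bound that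
      unfolding e_def M_def by auto
    have err: "\<forall>m\<le>n. \<bar>real_of_int (y 0) * \<eta> ^ m - real_of_int (y m)\<bar> \<le> D * Y * G"
      using scaled(1) unfolding Y_def by (simp add: algebra_simps)
    have size: "\<forall>m\<le>n. \<bar>real_of_int (y m)\<bar> \<le> D * Y * (\<bar>real_of_int (y n)\<bar> + G)"
    proof safe
      fix m assume "m \<le> n"
      have "\<bar>real_of_int (y m)\<bar> \<le> \<bar>real_of_int (y n)\<bar> * D + (1 + k * \<bar>A\<bar>) ^ n * D * G"
        using scaled(2)[OF \<open>m \<le> n\<close>] unfolding zM .
      also have "\<dots> \<le> D * Y * \<bar>real_of_int (y n)\<bar> + D * Y * G"
      proof (rule add_mono)
        show "\<bar>real_of_int (y n)\<bar> * D \<le> D * Y * \<bar>real_of_int (y n)\<bar>"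
          using mult_right_mono[OF \<open>D \<le> D * Y\<close> abs_ge_zero[of "real_of_int (y n)"]] by (simp add: mult.commute)
        show "(1 + k * \<bar>A\<bar>) ^ n * D * G \<le> D * Y * G"
          unfolding Y_def using \<open>D \<ge> 1\<close> \<open>G \<ge> 0\<close> \<open>M \<ge> 1\<close>
          by (simp add: algebra_simps mult_left_mono mult_right_mono)
      qed
      finally show "\<bar>real_of_int (y m)\<bar> \<le> D * Y * (\<bar>real_of_int (y n)\<bar> + G)" by (simp add: distrib_left)
    qed
    show "\<exists>y. y n \<noteq> 0 \<and> \<bar>y n\<bar> \<le> int N ^ (k - 1) * \<bar>coeff R 0\<bar> ^ Suc (n - k) \<and>
        (\<forall>m\<le>n. \<bar>real_of_int (y 0) * \<eta> ^ m - real_of_int (y m)\<bar> \<le> D * Y * (1 / real N +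
           \<bar>real_of_int (y n)\<bar> * ?P / ?c)) \<and>
        (\<forall>m\<le>n. \<bar>real_of_int (y m)\<bar> \<le> D * Y * (\<bar>real_of_int (y n)\<bar> + (1 / real N +
           \<bar>real_of_int (y n)\<bar> * ?P / ?c)))"
      using y_n err size unfolding G_def by (intro exI[of _ y] conjI)
  qed
qed

section \<open>The binomial shift of integer points\<close>

lemma abs_le_pt_norm: "i \<le> n \<Longrightarrow> \<bar>x i\<bar> \<le> pt_norm n x"
  unfolding pt_norm_def by (intro Max_ge) auto

lemma pt_norm_attained: "\<exists>i\<le>n. pt_norm n x = \<bar>x i\<bar>"
proof -
  have "pt_norm n x \<in> {\<bar>x i\<bar> | i. i \<le> n}" unfolding pt_norm_def by (intro Max_in) auto
  then show ?thesis by auto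
qed

lemma pt_norm_ge_1:
  assumes "\<forall>i>n. x i = 0" "x \<noteq> (\<lambda>_. 0)"
  shows "1 \<le> pt_norm n x"
proof -
  obtain j where "x j \<noteq> 0" using assms(2) by auto
  moreover have "j \<le> n" using assms(1) calculation by (meson not_le)
  ultimately show ?thesis using abs_le_pt_norm[of j n x] by linarith
qed

text \<open>The formula comes from expanding \<open>\<xi> ^ m = ((\<xi> - t) + t) ^ m\<close> binomially.\<close>

definition binomial_shift :: "nat \<Rightarrow> nat \<Rightarrow> (nat \<Rightarrow> int) \<Rightarrow> nat \<Rightarrow> int" where
  "binomial_shift t n y m = (if m \<le> n then \<Sum>l\<le>m. int (m choose l) * int t ^ (m - l) * y l else 0)"

lemma binomial_shift_0 [simp]: "binomial_shift t n y 0 = y 0"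
  by (simp add: binomial_shift_def)

lemma binomial_shift_nonzero:
  assumes "j \<le> n" "y j \<noteq> 0"
  shows "binomial_shift t n y \<noteq> (\<lambda>_. 0)"
proof
  assume zero: "binomial_shift t n y = (\<lambda>_. 0)"
  have "y m = 0" if "m \<le> n" for m
    using that
  proof (induction m rule: less_induct)
    case (less m)
    have "{..m} = insert m {..<m}" by auto
    then have "0 = y m + (\<Sum>l<m. int (m choose l) * int t ^ (m - l) * y l)"
      using fun_cong[OF zero, of m] less.prems by (simp add: binomial_shift_def)
    also have "(\<Sum>l<m. int (m choose l) * int t ^ (m - l) * y l) = 0"
      using less by (intro sum.neutral) auto
    finally show ?case by simp
  qed
  then show False using assms by simp
qed

lemma sum_binomial_shift_weights: "(\<Sum>l\<le>m. real (m choose l) * real t ^ (m - l) * E) = (1 + real t) ^ m * E"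
  using binomial_ring[of "1 :: real" "real t" m] by (simp add: sum_distrib_right add.commute)

lemma binomial_shift_error:
  fixes \<xi> :: real
  assumes "\<And>l. l \<le> n \<Longrightarrow> \<bar>y 0 * (\<xi> - t) ^ l - y l\<bar> \<le> E" "m \<le> n"
  shows "\<bar>y 0 * \<xi> ^ m - binomial_shift t n y m\<bar> \<le> (1 + real t) ^ n * E"
proof -
  have "y 0 * \<xi> ^ m - binomial_shift t n y m =
      (\<Sum>l\<le>m. real (m choose l) * real t ^ (m - l) * (y 0 * (\<xi> - t) ^ l - y l))"
  proof -
    have "\<xi> ^ m = ((\<xi> - t) + t) ^ m" by simp
    then have "y 0 * \<xi> ^ m = (\<Sum>l\<le>m. real (m choose l) * real t ^ (m - l) * (y 0 * (\<xi> - t) ^ l))"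
      by (simp only: binomial_ring) (simp add: sum_distrib_left mult_ac)
    then show ?thesis using assms(2)
      by (simp add: binomial_shift_def right_diff_distrib sum_subtractf)
  qed
  also have "\<bar>\<dots>\<bar> \<le> (\<Sum>l\<le>m. real (m choose l) * real t ^ (m - l) * E)"
    by (rule order_trans[OF sum_abs], rule sum_mono)
       (use assms in \<open>auto simp: abs_mult intro!: mult_left_mono\<close>)
  also have "\<dots> = (1 + real t) ^ m * E" by (rule sum_binomial_shift_weights)
  also have "\<dots> \<le> (1 + real t) ^ n * E"
    using assms order_trans[OF abs_ge_zero assms(1)[of 0]] by (intro mult_right_mono power_increasing) auto
  finally show ?thesis .
qed

lemma pt_norm_binomial_shift:
  fixes Y :: real
  assumes "\<And>l. l \<le> n \<Longrightarrow> \<bar>real_of_int (y l)\<bar> \<le> Y"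
  shows "pt_norm n (binomial_shift t n y) \<le> (1 + real t) ^ n * Y"
proof -
  obtain m where "m \<le> n" and m: "pt_norm n (binomial_shift t n y) = \<bar>binomial_shift t n y m\<bar>"
    using pt_norm_attained by blast
  have "\<bar>real_of_int (binomial_shift t n y m)\<bar> \<le> (\<Sum>l\<le>m. real (m choose l) * real t ^ (m - l) * Y)"
    unfolding binomial_shift_def using \<open>m \<le> n\<close>
    by (simp, intro order_trans[OF sum_abs] sum_mono)
       (use assms in \<open>auto simp: abs_mult intro!: mult_left_mono\<close>)
  also have "\<dots> = (1 + real t) ^ m * Y" by (rule sum_binomial_shift_weights)
  also have "\<dots> \<le> (1 + real t) ^ n * Y"
    using \<open>m \<le> n\<close> order_trans[OF abs_ge_zero assms[of 0]] by (intro mult_right_mono power_increasing) auto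
  finally show ?thesis using m by simp
qed

lemma binomial_shift_approximation:
  fixes \<xi> E Y :: real
  assumes "y n \<noteq> 0" "\<And>m. m \<le> n \<Longrightarrow> \<bar>y 0 * (\<xi> - t) ^ m - y m\<bar> \<le> E"
    and "\<And>m. m \<le> n \<Longrightarrow> \<bar>real_of_int (y m)\<bar> \<le> Y"
  shows "\<exists>x. (\<forall>i>n. x i = 0) \<and> x \<noteq> (\<lambda>_. 0) \<and> pt_norm n x \<le> (1 + real t) ^ n * Y \<and>
    (\<forall>m\<in>{1..n}. \<bar>real_of_int (x 0) * \<xi> ^ m - real_of_int (x m)\<bar> \<le> (1 + real t) ^ n * E)"
proof (intro exI conjI)
  show "\<forall>i>n. binomial_shift t n y i = 0" by (simp add: binomial_shift_def)
  show "binomial_shift t n y \<noteq> (\<lambda>_. 0)" using binomial_shift_nonzero assms(1) by blast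
  show "pt_norm n (binomial_shift t n y) \<le> (1 + real t) ^ n * Y" using assms(3) by (rule pt_norm_binomial_shift)
  show "\<forall>m\<in>{1..n}. \<bar>real_of_int (binomial_shift t n y 0) * \<xi> ^ m - binomial_shift t n y m\<bar>
      \<le> (1 + real t) ^ n * E"
    using binomial_shift_error[OF assms(2)] by simp
qed

section \<open>A good point from a small polynomial value\<close>

definition approx_polys :: "nat \<Rightarrow> real \<Rightarrow> real \<Rightarrow> int poly set" where
  "approx_polys k \<xi> \<omega> = {P. P \<noteq> 0 \<and> degree P \<le> k \<and>
     \<bar>poly (map_poly of_int P) \<xi>\<bar> \<le> real_of_int (poly_height P) powr (-\<omega>)}"

definition approx_points :: "nat \<Rightarrow> real \<Rightarrow> real \<Rightarrow> (nat \<Rightarrow> int) set" where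
  "approx_points n \<xi> l = {x. (\<forall>i>n. x i = 0) \<and> x \<noteq> (\<lambda>_. 0) \<and>
     (\<forall>m\<in>{1..n}. \<bar>real_of_int (x 0) * \<xi> ^ m - real_of_int (x m)\<bar> \<le> real_of_int (pt_norm n x) powr (-l))}"

definition transference_bound :: "nat \<Rightarrow> nat \<Rightarrow> real \<Rightarrow> real" where
  "transference_bound k n \<omega> = (\<omega> - real n + real k) / ((real k - 1) * \<omega> + real n)"

lemma scaled_solution_bounds:
  fixes h a b \<omega> C0 c Y E :: real and N :: nat
  assumes "1 \<le> h" "0 < b" "1 \<le> C0" "h \<le> C0 * c" "c \<le> C0 * h" "N = nat \<lceil>h powr b\<rceil>"
    and "Y \<le> real N ^ (k - 1) * c ^ Suc (n - k)" "0 \<le> E" "E \<le> h powr (-\<omega>)"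
    and "a = b * real (k - 1) + real (Suc (n - k))" "a - \<omega> - 1 = -b"
  shows "Y \<le> 2 ^ (k - 1) * C0 ^ Suc (n - k) * h powr a"
    "1 / real N + Y * E / c \<le> (1 + 2 ^ (k - 1) * C0 ^ Suc (n - k) * C0) * h powr (-b)"
proof -
  define c1 where "c1 = 2 ^ (k - 1) * C0 ^ Suc (n - k)"
  have "h > 0" using assms(1) by simp
  have "1 \<le> h powr b" using assms(1,2) by (simp add: ge_one_powr_ge_zero)
  then have "h powr b \<le> N" "N \<le> 2 * h powr b" unfolding assms(6) by linarith+
  have "0 < C0 * c" using assms(1,4) by linarith
  then have "c \<ge> 0" using \<open>C0 \<ge> 1\<close> by (simp add: zero_less_mult_iff)
  have "Y \<le> real N ^ (k - 1) * c ^ Suc (n - k)" by fact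
  also have "\<dots> \<le> (2 * h powr b) ^ (k - 1) * (C0 * h) ^ Suc (n - k)"
    using \<open>N \<le> 2 * h powr b\<close> \<open>c \<ge> 0\<close> assms(5) by (intro mult_mono power_mono) auto
  also have "\<dots> = c1 * ((h powr b) ^ (k - 1) * h ^ Suc (n - k))"
    unfolding c1_def by (simp only: power_mult_distrib mult_ac)
  also have "(h powr b) ^ (k - 1) * h ^ Suc (n - k) = h powr a"
    unfolding assms(10) powr_add powr_realpow[OF \<open>h > 0\<close>]
    using powr_power[of h b "k - 1"] \<open>h > 0\<close> by (simp add: mult.commute)
  finally show Y: "Y \<le> c1 * h powr a" .
  have "1 / real N \<le> h powr (-b)"
    unfolding powr_minus_divide
  proof (rule divide_left_mono)
    show "0 < real N * h powr b" using \<open>h powr b \<le> N\<close> \<open>1 \<le> h powr b\<close> by (intro mult_pos_pos) linarith+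
  qed (use \<open>h powr b \<le> N\<close> in auto)
  moreover have "Y * E / c \<le> c1 * h powr a * h powr (-\<omega>) / (h / C0)"
  proof (rule frac_le)
    show "0 \<le> c1 * h powr a * h powr (-\<omega>)" unfolding c1_def using \<open>C0 \<ge> 1\<close> by simp
    show "Y * E \<le> c1 * h powr a * h powr (-\<omega>)"
    proof -
      have "Y * E \<le> (c1 * h powr a) * E" using Y assms(8) by (rule mult_right_mono)
      also have "\<dots> \<le> (c1 * h powr a) * h powr (-\<omega>)"
        using assms(9) \<open>C0 \<ge> 1\<close> unfolding c1_def by (intro mult_left_mono) auto
      finally show ?thesis .
    qed
    show "0 < h / C0" using \<open>h > 0\<close> \<open>C0 \<ge> 1\<close> by simp
    show "h / C0 \<le> c" using assms(4) \<open>C0 \<ge> 1\<close> by (simp add: divide_le_eq mult.commute)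
  qed
  moreover have "c1 * h powr a * h powr (-\<omega>) / (h / C0) = c1 * C0 * (h powr a * h powr (-\<omega>) / h)"
    using \<open>C0 \<ge> 1\<close> \<open>h > 0\<close> by (simp add: field_simps)
  moreover have "h powr a * h powr (-\<omega>) / h = h powr (-b)"
    unfolding assms(11)[symmetric] using \<open>h > 0\<close> by (simp add: powr_diff powr_minus divide_inverse)
  ultimately show "1 / real N + Y * E / c \<le> (1 + c1 * C0) * h powr (-b)" by (simp add: algebra_simps)
qed

lemma recurrence_solution_for_shifted_poly:
  fixes \<xi> :: real
  assumes "\<xi> \<noteq> real t" "t \<le> k" "1 \<le> k" "k \<le> n"
  obtains C :: real where "C \<ge> 1"
    "\<And>P N. degree P \<le> k \<Longrightarrow> P \<noteq> 0 \<Longrightarrow> (\<And>u. u \<le> k \<Longrightarrow> \<bar>poly P (int u)\<bar> \<le> \<bar>poly P (int t)\<bar>) \<Longrightarrow>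
      1 \<le> N \<Longrightarrow> poly_height P \<le> C * \<bar>real_of_int (poly P (int t))\<bar> \<and>
      \<bar>real_of_int (poly P (int t))\<bar> \<le> C * poly_height P \<and>
      (\<exists>y. y n \<noteq> 0 \<and> \<bar>y n\<bar> \<le> int N ^ (k - 1) * \<bar>poly P (int t)\<bar> ^ Suc (n - k) \<and>
        (\<forall>m\<le>n. \<bar>real_of_int (y 0) * (\<xi> - t) ^ m - real_of_int (y m)\<bar> \<le> C * (1 / real N +
           \<bar>real_of_int (y n)\<bar> * \<bar>poly (map_poly of_int P) \<xi>\<bar> / \<bar>real_of_int (poly P (int t))\<bar>)) \<and>
        (\<forall>m\<le>n. \<bar>real_of_int (y m)\<bar> \<le> C * (\<bar>real_of_int (y n)\<bar> + (1 / real N +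
           \<bar>real_of_int (y n)\<bar> * \<bar>poly (map_poly of_int P) \<xi>\<bar> / \<bar>real_of_int (poly P (int t))\<bar>))))"
proof -
  obtain C0 :: real where "C0 \<ge> 1" and C0: "\<And>P t. degree P \<le> k \<Longrightarrow> t \<le> k \<Longrightarrow>
      (\<And>u. u \<le> k \<Longrightarrow> \<bar>poly P (int u)\<bar> \<le> \<bar>poly P (int t)\<bar>) \<Longrightarrow>
      poly_height P \<le> C0 * \<bar>real_of_int (poly P (int t))\<bar> \<and>
      \<bar>real_of_int (poly P (int t))\<bar> \<le> C0 * poly_height P \<and>
      (\<forall>i. \<bar>real_of_int (coeff (pcompose P [:int t, 1:]) i)\<bar> \<le> C0 * \<bar>real_of_int (poly P (int t))\<bar>)"
    using shifted_poly_bounds[of k] by blast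
  obtain K :: real where "K \<ge> 1" and K: "\<And>R N. degree R \<le> k \<Longrightarrow> coeff R 0 \<noteq> 0 \<Longrightarrow>
      (\<And>i. \<bar>real_of_int (coeff R i)\<bar> \<le> C0 * \<bar>real_of_int (coeff R 0)\<bar>) \<Longrightarrow> 1 \<le> N \<Longrightarrow>
      \<exists>y. y n \<noteq> 0 \<and> \<bar>y n\<bar> \<le> int N ^ (k - 1) * \<bar>coeff R 0\<bar> ^ Suc (n - k) \<and>
        (\<forall>m\<le>n. \<bar>real_of_int (y 0) * (\<xi> - t) ^ m - real_of_int (y m)\<bar> \<le> K * (1 / real N +
           \<bar>real_of_int (y n)\<bar> * \<bar>poly (map_poly of_int R) (\<xi> - t)\<bar> / \<bar>real_of_int (coeff R 0)\<bar>)) \<and>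
        (\<forall>m\<le>n. \<bar>real_of_int (y m)\<bar> \<le> K * (\<bar>real_of_int (y n)\<bar> + (1 / real N +
           \<bar>real_of_int (y n)\<bar> * \<bar>poly (map_poly of_int R) (\<xi> - t)\<bar> / \<bar>real_of_int (coeff R 0)\<bar>)))"
    by (rule approximation_by_recurrence_solutions[of "\<xi> - t" k n C0]) (use assms(1,3,4) in auto)
  show ?thesis
  proof (rule that[of "max C0 K"])
    show "1 \<le> max C0 K" using \<open>K \<ge> 1\<close> by simp
  next
    fix P :: "int poly" and N :: nat
    assume "degree P \<le> k" "P \<noteq> 0" "\<And>u. u \<le> k \<Longrightarrow> \<bar>poly P (int u)\<bar> \<le> \<bar>poly P (int t)\<bar>" "1 \<le> N"
    define R where "R = pcompose P [:int t, 1:]"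
    have "poly_height P \<le> C0 * \<bar>real_of_int (poly P (int t))\<bar>"
      and "\<bar>real_of_int (poly P (int t))\<bar> \<le> C0 * poly_height P"
      and "\<And>i. \<bar>real_of_int (coeff R i)\<bar> \<le> C0 * \<bar>real_of_int (poly P (int t))\<bar>"
      using C0[OF \<open>degree P \<le> k\<close> assms(2)] \<open>\<And>u. u \<le> k \<Longrightarrow> _\<close> unfolding R_def by auto
    moreover have "poly P (int t) \<noteq> 0"
      using \<open>P \<noteq> 0\<close> poly_height_ge_1 calculation(1) by fastforce
    moreover have "coeff R 0 = poly P (int t)" unfolding R_def by (simp add: poly_0_coeff_0[symmetric] poly_pcompose)
    moreover have "degree R \<le> k" using degree_pcompose_le[of P "[:int t, 1:]"] \<open>degree P \<le> k\<close> by (simp add: R_def)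
    moreover have "poly (map_poly of_int R) (\<xi> - t) = poly (map_poly of_int P) \<xi>"
      unfolding R_def poly_map_poly_of_int_shift by simp
    ultimately obtain y where y: "y n \<noteq> 0" "\<bar>y n\<bar> \<le> int N ^ (k - 1) * \<bar>poly P (int t)\<bar> ^ Suc (n - k)"
      and err: "\<forall>m\<le>n. \<bar>real_of_int (y 0) * (\<xi> - t) ^ m - real_of_int (y m)\<bar> \<le> K * (1 / real N +
           \<bar>real_of_int (y n)\<bar> * \<bar>poly (map_poly of_int P) \<xi>\<bar> / \<bar>real_of_int (poly P (int t))\<bar>)"
      and size: "\<forall>m\<le>n. \<bar>real_of_int (y m)\<bar> \<le> K * (\<bar>real_of_int (y n)\<bar> + (1 / real N +
           \<bar>real_of_int (y n)\<bar> * \<bar>poly (map_poly of_int P) \<xi>\<bar> / \<bar>real_of_int (poly P (int t))\<bar>))"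
      using K[of R N] \<open>1 \<le> N\<close> by auto
    have le_max: "C0 * x \<le> max C0 K * x" "K * x \<le> max C0 K * x" if "0 \<le> x" for x :: real
      using that by (simp_all add: mult_right_mono)
    show "poly_height P \<le> max C0 K * \<bar>real_of_int (poly P (int t))\<bar> \<and>
      \<bar>real_of_int (poly P (int t))\<bar> \<le> max C0 K * poly_height P \<and>
      (\<exists>y. y n \<noteq> 0 \<and> \<bar>y n\<bar> \<le> int N ^ (k - 1) * \<bar>poly P (int t)\<bar> ^ Suc (n - k) \<and>
        (\<forall>m\<le>n. \<bar>real_of_int (y 0) * (\<xi> - t) ^ m - real_of_int (y m)\<bar> \<le> max C0 K * (1 / real N +
           \<bar>real_of_int (y n)\<bar> * \<bar>poly (map_poly of_int P) \<xi>\<bar> / \<bar>real_of_int (poly P (int t))\<bar>)) \<and>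
        (\<forall>m\<le>n. \<bar>real_of_int (y m)\<bar> \<le> max C0 K * (\<bar>real_of_int (y n)\<bar> + (1 / real N +
           \<bar>real_of_int (y n)\<bar> * \<bar>poly (map_poly of_int P) \<xi>\<bar> / \<bar>real_of_int (poly P (int t))\<bar>))))"
    proof (intro conjI exI[of _ y] allI impI)
      show "poly_height P \<le> max C0 K * \<bar>real_of_int (poly P (int t))\<bar>"
        using order_trans[OF \<open>poly_height P \<le> C0 * _\<close> le_max(1)] by simp
      show "\<bar>real_of_int (poly P (int t))\<bar> \<le> max C0 K * poly_height P"
        using order_trans[OF \<open>\<bar>real_of_int (poly P (int t))\<bar> \<le> C0 * _\<close> le_max(1)] poly_height_nonneg by simp
      fix m assume "m \<le> n"
      show "\<bar>real_of_int (y 0) * (\<xi> - t) ^ m - real_of_int (y m)\<bar> \<le> max C0 K * (1 / real N +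
           \<bar>real_of_int (y n)\<bar> * \<bar>poly (map_poly of_int P) \<xi>\<bar> / \<bar>real_of_int (poly P (int t))\<bar>)"
        using order_trans[OF err[rule_format, OF \<open>m \<le> n\<close>] le_max(2)] by simp
      show "\<bar>real_of_int (y m)\<bar> \<le> max C0 K * (\<bar>real_of_int (y n)\<bar> + (1 / real N +
           \<bar>real_of_int (y n)\<bar> * \<bar>poly (map_poly of_int P) \<xi>\<bar> / \<bar>real_of_int (poly P (int t))\<bar>))"
        using order_trans[OF size[rule_format, OF \<open>m \<le> n\<close>] le_max(2)] by simp
    qed (use y in auto)
  qed
qed


lemma point_from_approx_poly:
  fixes \<xi> \<omega> :: real
  assumes "\<xi> \<noteq> real t" "t \<le> k" "1 \<le> k" "k \<le> n" "real n - real k < \<omega>"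
  defines "a \<equiv> ((real k - 1) * \<omega> + real n) / real k" and "b \<equiv> (\<omega> - real n + real k) / real k"
  obtains C :: real where "C > 0"
    "\<And>P. P \<in> approx_polys k \<xi> \<omega> \<Longrightarrow> (\<And>u. u \<le> k \<Longrightarrow> \<bar>poly P (int u)\<bar> \<le> \<bar>poly P (int t)\<bar>) \<Longrightarrow>
       \<exists>x. (\<forall>i>n. x i = 0) \<and> x \<noteq> (\<lambda>_. 0) \<and>
         pt_norm n x \<le> C * real_of_int (poly_height P) powr a \<and>
         (\<forall>m\<in>{1..n}. \<bar>real_of_int (x 0) * \<xi> ^ m - real_of_int (x m)\<bar> \<le> C * real_of_int (poly_height P) powr (-b))"
proof -
  have "b > 0" "a = b * real (k - 1) + real (Suc (n - k))" "a - \<omega> - 1 = -b"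
    using assms(3-5) by (simp_all add: a_def b_def field_simps of_nat_diff)
  then have "a > 0" by (simp add: add_nonneg_pos)
  obtain K :: real where "K \<ge> 1" and K: "\<And>P N. degree P \<le> k \<Longrightarrow> P \<noteq> 0 \<Longrightarrow>
      (\<And>u. u \<le> k \<Longrightarrow> \<bar>poly P (int u)\<bar> \<le> \<bar>poly P (int t)\<bar>) \<Longrightarrow>
      1 \<le> N \<Longrightarrow> poly_height P \<le> K * \<bar>real_of_int (poly P (int t))\<bar> \<and>
      \<bar>real_of_int (poly P (int t))\<bar> \<le> K * poly_height P \<and>
      (\<exists>y. y n \<noteq> 0 \<and> \<bar>y n\<bar> \<le> int N ^ (k - 1) * \<bar>poly P (int t)\<bar> ^ Suc (n - k) \<and>
        (\<forall>m\<le>n. \<bar>real_of_int (y 0) * (\<xi> - t) ^ m - real_of_int (y m)\<bar> \<le> K * (1 / real N +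
           \<bar>real_of_int (y n)\<bar> * \<bar>poly (map_poly of_int P) \<xi>\<bar> / \<bar>real_of_int (poly P (int t))\<bar>)) \<and>
        (\<forall>m\<le>n. \<bar>real_of_int (y m)\<bar> \<le> K * (\<bar>real_of_int (y n)\<bar> + (1 / real N +
           \<bar>real_of_int (y n)\<bar> * \<bar>poly (map_poly of_int P) \<xi>\<bar> / \<bar>real_of_int (poly P (int t))\<bar>))))"
    using recurrence_solution_for_shifted_poly[OF assms(1-4)] by blast
  define c1 where "c1 = 2 ^ (k - 1) * K ^ Suc (n - k)"
  show ?thesis
  proof (rule that[of "(1 + real t) ^ n * (K * (1 + c1 + c1 * K))"])
    show "(1 + real t) ^ n * (K * (1 + c1 + c1 * K)) > 0"
      unfolding c1_def using \<open>K \<ge> 1\<close> by (simp add: add_pos_nonneg)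
  next
    fix P assume P: "P \<in> approx_polys k \<xi> \<omega>"
      and max: "\<And>u. u \<le> k \<Longrightarrow> \<bar>poly P (int u)\<bar> \<le> \<bar>poly P (int t)\<bar>"
    define h where "h = real_of_int (poly_height P)"
    define c where "c = \<bar>real_of_int (poly P (int t))\<bar>"
    \<comment> \<open>this choice balances the two error terms \<open>1 / N\<close> and \<open>\<bar>y n\<bar> * \<bar>P(\<xi>)\<bar> / \<bar>c\<bar>\<close>\<close>
    define N where "N = nat \<lceil>h powr b\<rceil>"
    have "degree P \<le> k" "P \<noteq> 0" and P_small: "\<bar>poly (map_poly of_int P) \<xi>\<bar> \<le> h powr (-\<omega>)"
      using P unfolding approx_polys_def h_def by auto
    then have "h \<ge> 1" unfolding h_def using poly_height_ge_1 by simp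
    have "1 \<le> h powr b" using \<open>h \<ge> 1\<close> \<open>b > 0\<close> by (simp add: ge_one_powr_ge_zero)
    then have "1 \<le> N" unfolding N_def by linarith
    obtain y where "y n \<noteq> 0" and y_n: "\<bar>y n\<bar> \<le> int N ^ (k - 1) * \<bar>poly P (int t)\<bar> ^ Suc (n - k)"
      and y_err: "\<forall>m\<le>n. \<bar>real_of_int (y 0) * (\<xi> - t) ^ m - real_of_int (y m)\<bar> \<le> K * (1 / real N +
           \<bar>real_of_int (y n)\<bar> * \<bar>poly (map_poly of_int P) \<xi>\<bar> / c)"
      and y_size: "\<forall>m\<le>n. \<bar>real_of_int (y m)\<bar> \<le> K * (\<bar>real_of_int (y n)\<bar> + (1 / real N +
           \<bar>real_of_int (y n)\<bar> * \<bar>poly (map_poly of_int P) \<xi>\<bar> / c))"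
      and "h \<le> K * c" "c \<le> K * h"
      using K[OF \<open>degree P \<le> k\<close> \<open>P \<noteq> 0\<close> max \<open>1 \<le> N\<close>] unfolding c_def h_def by blast
    have "real_of_int \<bar>y n\<bar> \<le> real_of_int (int N ^ (k - 1) * \<bar>poly P (int t)\<bar> ^ Suc (n - k))"
      using y_n by (simp only: of_int_le_iff)
    then have Y: "\<bar>real_of_int (y n)\<bar> \<le> c1 * h powr a"
      and G: "1 / real N + \<bar>real_of_int (y n)\<bar> * \<bar>poly (map_poly of_int P) \<xi>\<bar> / c \<le> (1 + c1 * K) * h powr (-b)"
      using scaled_solution_bounds[OF \<open>h \<ge> 1\<close> \<open>b > 0\<close> \<open>K \<ge> 1\<close> \<open>h \<le> K * c\<close> \<open>c \<le> K * h\<close> N_def _ _ P_small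
          \<open>a = b * real (k - 1) + real (Suc (n - k))\<close> \<open>a - \<omega> - 1 = -b\<close>, folded c1_def]
      unfolding c_def by simp_all
    have "(1 + c1 * K) * h powr (-b) \<le> (1 + c1 * K) * h powr a"
      using \<open>h \<ge> 1\<close> \<open>b > 0\<close> \<open>a > 0\<close> \<open>K \<ge> 1\<close> unfolding c1_def by (intro mult_left_mono powr_mono) auto
    then have "\<bar>real_of_int (y n)\<bar> + (1 / real N + \<bar>real_of_int (y n)\<bar> * \<bar>poly (map_poly of_int P) \<xi>\<bar> / c)
        \<le> (1 + c1 + c1 * K) * h powr a"
      using Y G by (simp add: algebra_simps)
    then have "\<bar>real_of_int (y m)\<bar> \<le> K * (1 + c1 + c1 * K) * h powr a" if "m \<le> n" for m
      using order_trans[OF y_size[rule_format, OF that] mult_left_mono] \<open>K \<ge> 1\<close> by (simp add: mult.assoc)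
    moreover have "\<bar>real_of_int (y 0) * (\<xi> - t) ^ m - real_of_int (y m)\<bar> \<le> K * (1 + c1 + c1 * K) * h powr (-b)"
      if "m \<le> n" for m
    proof -
      have "(1 + c1 * K) * h powr (-b) \<le> (1 + c1 + c1 * K) * h powr (-b)"
        unfolding c1_def using \<open>K \<ge> 1\<close> by (intro mult_right_mono) auto
      with G have "K * (1 / real N + \<bar>real_of_int (y n)\<bar> * \<bar>poly (map_poly of_int P) \<xi>\<bar> / c)
          \<le> K * (1 + c1 + c1 * K) * h powr (-b)"
        using \<open>K \<ge> 1\<close> by (simp add: mult.assoc mult_left_mono)
      then show ?thesis using y_err that by fastforce
    qed
    ultimately show "\<exists>x. (\<forall>i>n. x i = 0) \<and> x \<noteq> (\<lambda>_. 0) \<and>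
        pt_norm n x \<le> (1 + real t) ^ n * (K * (1 + c1 + c1 * K)) * h powr a \<and>
        (\<forall>m\<in>{1..n}. \<bar>real_of_int (x 0) * \<xi> ^ m - real_of_int (x m)\<bar>
           \<le> (1 + real t) ^ n * (K * (1 + c1 + c1 * K)) * h powr (-b))"
      using binomial_shift_approximation[where y = y and n = n and t = t and \<xi> = \<xi>, OF \<open>y n \<noteq> 0\<close>]
      by (simp add: mult.assoc)
  qed
qed

section \<open>Infinitely many good points\<close>

lemma infinite_if_positive_values_tend_to_0:
  fixes f :: "'a \<Rightarrow> real"
  assumes pos: "\<And>x. x \<in> X \<Longrightarrow> f x > 0" and small: "\<And>\<epsilon>. \<epsilon> > 0 \<Longrightarrow> \<exists>x\<in>X. f x < \<epsilon>"
  shows "infinite X"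
proof
  assume "finite X"
  moreover obtain x0 where "x0 \<in> X" using small[of 1] by auto
  ultimately have "Min (f ` X) \<in> f ` X" by (intro Min_in) auto
  then obtain x where "x \<in> X" "f x < Min (f ` X)" using pos small by (metis imageE)
  moreover have "Min (f ` X) \<le> f x" using \<open>finite X\<close> \<open>x \<in> X\<close> by simp
  ultimately show False by simp
qed

definition approx_error :: "nat \<Rightarrow> real \<Rightarrow> (nat \<Rightarrow> int) \<Rightarrow> real" where
  "approx_error n \<xi> x = (\<Sum>m=1..n. \<bar>real_of_int (x 0) * \<xi> ^ m - real_of_int (x m)\<bar>)"

lemma approx_error_pos:
  fixes \<xi> :: real
  assumes "\<xi> \<notin> \<rat>" "1 \<le> n" "\<forall>i>n. x i = 0" "x \<noteq> (\<lambda>_. 0)"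
  shows "approx_error n \<xi> x > 0"
proof -
  have "\<exists>m\<in>{1..n}. real_of_int (x 0) * \<xi> ^ m \<noteq> real_of_int (x m)"
  proof (cases "x 0 = 0")
    case True
    then obtain j where "x j \<noteq> 0" "0 < j" using assms(4) by (metis gr0I)
    moreover have "j \<le> n" using assms(3) calculation(1) by (meson not_le)
    ultimately show ?thesis using True by force
  next
    case False
    have "real_of_int (x 0) * \<xi> \<noteq> real_of_int (x 1)"
    proof
      assume "real_of_int (x 0) * \<xi> = real_of_int (x 1)"
      then have "\<xi> = real_of_int (x 1) / real_of_int (x 0)" using False by (simp add: field_simps)
      then show False using assms(1) by simp
    qed
    then show ?thesis using assms(2) by force
  qed
  then obtain m where "m \<in> {1..n}" "real_of_int (x 0) * \<xi> ^ m \<noteq> real_of_int (x m)" ..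
  then show ?thesis unfolding approx_error_def by (intro sum_pos2[of "{1..n}" m]) auto
qed

lemma exists_poly_of_large_height:
  fixes S :: "int poly set"
  assumes "infinite S" "\<And>P. P \<in> S \<Longrightarrow> degree P \<le> k"
  obtains P where "P \<in> S" "h0 \<le> real_of_int (poly_height P)"
proof -
  have "\<not> S \<subseteq> {P. degree P \<le> k \<and> poly_height P \<le> \<lceil>h0\<rceil>}"
    using assms(1) finite_polys_bounded_height finite_subset by blast
  then obtain P where "P \<in> S" "\<not> poly_height P \<le> \<lceil>h0\<rceil>" using assms(2) by blast
  moreover from this(2) have "h0 \<le> real_of_int (poly_height P)" by linarith
  ultimately show ?thesis using that by blast
qed

lemma infinite_polys_max_at_node:
  fixes S :: "int poly set"
  assumes "infinite S"
  obtains t where "t \<le> k" "infinite {P \<in> S. \<forall>u\<le>k. \<bar>poly P (int u)\<bar> \<le> \<bar>poly P (int t)\<bar>}"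
proof -
  have "S \<subseteq> (\<Union>t\<le>k. {P \<in> S. \<forall>u\<le>k. \<bar>poly P (int u)\<bar> \<le> \<bar>poly P (int t)\<bar>})"
  proof
    fix P assume "P \<in> S"
    have "Max ((\<lambda>u. \<bar>poly P (int u)\<bar>) ` {..k}) \<in> (\<lambda>u. \<bar>poly P (int u)\<bar>) ` {..k}" by (intro Max_in) auto
    then obtain t where "t \<le> k" "Max ((\<lambda>u. \<bar>poly P (int u)\<bar>) ` {..k}) = \<bar>poly P (int t)\<bar>"
      unfolding image_iff atMost_iff by blast
    moreover have "\<bar>poly P (int u)\<bar> \<le> \<bar>poly P (int t)\<bar>" if "u \<le> k" for u
      unfolding calculation(2)[symmetric] using that by (intro Max_ge) auto
    ultimately show "P \<in> (\<Union>t\<le>k. {P \<in> S. \<forall>u\<le>k. \<bar>poly P (int u)\<bar> \<le> \<bar>poly P (int t)\<bar>})"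
      using \<open>P \<in> S\<close> by blast
  qed
  moreover have "\<exists>t\<le>k. infinite {P \<in> S. \<forall>u\<le>k. \<bar>poly P (int u)\<bar> \<le> \<bar>poly P (int t)\<bar>}"
  proof (rule ccontr)
    assume "\<not> ?thesis"
    then have "finite (\<Union>t\<le>k. {P \<in> S. \<forall>u\<le>k. \<bar>poly P (int u)\<bar> \<le> \<bar>poly P (int t)\<bar>})" by auto
    with calculation assms show False using finite_subset by blast
  qed
  ultimately show ?thesis using that by blast
qed

lemma eventually_powr_le_powr:
  fixes C a b l :: real
  assumes "C > 0" "l * a < b"
  shows "eventually (\<lambda>h. C * h powr (-b) \<le> (C * h powr a) powr (-l)) at_top"
proof -
  have "((\<lambda>h. h powr (-(b - l * a))) \<longlongrightarrow> 0) at_top"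
    using assms(2) by (intro tendsto_neg_powr filterlim_ident) auto
  then have "eventually (\<lambda>h. h powr (-(b - l * a)) < C powr (-l) / C) at_top"
    using assms(1) by (intro order_tendstoD(2)) auto
  moreover have "eventually (\<lambda>h::real. h > 0) at_top" by (rule eventually_gt_at_top)
  ultimately show ?thesis
  proof eventually_elim
    case (elim h)
    have "C * h powr (-b) = C * h powr (-(b - l * a)) * h powr (-(l * a))"
      by (simp add: mult.assoc powr_add[symmetric])
    also have "\<dots> \<le> C powr (-l) * h powr (-(l * a))"
      using elim assms(1) by (simp add: field_simps)
    also have "\<dots> = (C * h powr a) powr (-l)"
      using elim assms(1) by (simp add: powr_mult powr_powr mult.commute)
    finally show ?case .
  qed
qed

lemma infinite_approx_points:
  fixes \<xi> \<omega> l :: real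
  assumes "\<not> algebraic \<xi>" "1 \<le> k" "k \<le> n" "real n - real k < \<omega>" "infinite (approx_polys k \<xi> \<omega>)"
    and "0 < l" "l < transference_bound k n \<omega>"
  shows "infinite (approx_points n \<xi> l)"
proof -
  obtain t where "t \<le> k"
    and inf: "infinite {P \<in> approx_polys k \<xi> \<omega>. \<forall>u\<le>k. \<bar>poly P (int u)\<bar> \<le> \<bar>poly P (int t)\<bar>}"
    using infinite_polys_max_at_node[OF assms(5)] by blast
  have "\<xi> \<notin> \<rat>" using assms(1) rat_imp_algebraic by blast
  then have "\<xi> \<noteq> real t" by (metis Rats_of_nat)
  define a where "a = ((real k - 1) * \<omega> + real n) / real k"
  define b where "b = (\<omega> - real n + real k) / real k"
  have "b > 0" unfolding b_def using assms(2,4) by simp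
  have "0 \<le> (real k - 1) * \<omega>" using assms(2-4) by simp
  then have "a > 0" unfolding a_def using assms(2,3) by simp
  have "b / a = transference_bound k n \<omega>"
    unfolding a_def b_def transference_bound_def using assms(2) by simp
  then have "l < b / a" using assms(7) by simp
  then have "l * a < b" using \<open>a > 0\<close> by (simp add: pos_less_divide_eq)
  obtain C where "C > 0" and C: "\<And>P. P \<in> approx_polys k \<xi> \<omega> \<Longrightarrow>
      (\<And>u. u \<le> k \<Longrightarrow> \<bar>poly P (int u)\<bar> \<le> \<bar>poly P (int t)\<bar>) \<Longrightarrow>
       \<exists>x. (\<forall>i>n. x i = 0) \<and> x \<noteq> (\<lambda>_. 0) \<and>
         pt_norm n x \<le> C * real_of_int (poly_height P) powr a \<and>
         (\<forall>m\<in>{1..n}. \<bar>real_of_int (x 0) * \<xi> ^ m - real_of_int (x m)\<bar> \<le> C * real_of_int (poly_height P) powr (-b))"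
    using point_from_approx_poly[OF \<open>\<xi> \<noteq> real t\<close> \<open>t \<le> k\<close> assms(2-4)] unfolding a_def b_def by blast
  show ?thesis
  proof (rule infinite_if_positive_values_tend_to_0)
    show "approx_error n \<xi> x > 0" if "x \<in> approx_points n \<xi> l" for x
      using approx_error_pos[OF \<open>\<xi> \<notin> \<rat>\<close>] that assms(2,3) unfolding approx_points_def by auto
  next
    fix \<epsilon> :: real assume "\<epsilon> > 0"
    have "((\<lambda>h. h powr (-b)) \<longlongrightarrow> 0) at_top"
      using \<open>b > 0\<close> by (intro tendsto_neg_powr filterlim_ident) auto
    then have "((\<lambda>h. n * (C * h powr (-b))) \<longlongrightarrow> n * (C * 0)) at_top" by (intro tendsto_intros)
    then have "eventually (\<lambda>h. n * (C * h powr (-b)) < \<epsilon>) at_top"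
      using \<open>\<epsilon> > 0\<close> by (intro order_tendstoD(2)) auto
    then have "eventually (\<lambda>h. C * h powr (-b) \<le> (C * h powr a) powr (-l) \<and> n * (C * h powr (-b)) < \<epsilon>) at_top"
      using eventually_powr_le_powr[OF \<open>C > 0\<close> \<open>l * a < b\<close>] by eventually_elim auto
    then obtain h0 where h0: "\<And>h. h \<ge> h0 \<Longrightarrow>
        C * h powr (-b) \<le> (C * h powr a) powr (-l) \<and> n * (C * h powr (-b)) < \<epsilon>"
      unfolding eventually_at_top_linorder by blast
    obtain P where "P \<in> {P \<in> approx_polys k \<xi> \<omega>. \<forall>u\<le>k. \<bar>poly P (int u)\<bar> \<le> \<bar>poly P (int t)\<bar>}"
      and "h0 \<le> real_of_int (poly_height P)"
      by (rule exists_poly_of_large_height[OF inf]) (auto simp: approx_polys_def)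
    then have P: "P \<in> approx_polys k \<xi> \<omega>" "\<forall>u\<le>k. \<bar>poly P (int u)\<bar> \<le> \<bar>poly P (int t)\<bar>" by auto
    define h where "h = real_of_int (poly_height P)"
    obtain x where x: "\<forall>i>n. x i = 0" "x \<noteq> (\<lambda>_. 0)" "pt_norm n x \<le> C * h powr a"
      and x_err: "\<forall>m\<in>{1..n}. \<bar>real_of_int (x 0) * \<xi> ^ m - real_of_int (x m)\<bar> \<le> C * h powr (-b)"
      using C[OF P(1)] P(2) unfolding h_def by blast
    have "(C * h powr a) powr (-l) \<le> pt_norm n x powr (-l)"
      using x pt_norm_ge_1[OF x(1,2)] \<open>l > 0\<close> by (intro powr_mono2') auto
    then have "x \<in> approx_points n \<xi> l"
      using x x_err h0[of h] \<open>h0 \<le> real_of_int (poly_height P)\<close> unfolding approx_points_def h_def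
      by force
    moreover have "approx_error n \<xi> x \<le> (\<Sum>m=1..n. C * h powr (-b))"
      unfolding approx_error_def using x_err by (intro sum_mono) auto
    ultimately show "\<exists>x\<in>approx_points n \<xi> l. approx_error n \<xi> x < \<epsilon>"
      using h0[of h] \<open>h0 \<le> real_of_int (poly_height P)\<close> unfolding h_def by force
  qed
qed

section \<open>The exponents\<close>

lemma omega_exp_eq: "omega_exp k \<xi> = Sup (ereal ` {\<omega>. infinite (approx_polys k \<xi> \<omega>)})"
  unfolding omega_exp_def approx_polys_def ..

lemma lambda_exp_eq: "lambda_exp n \<xi> = Sup (ereal ` {l. infinite (approx_points n \<xi> l)})"
  unfolding lambda_exp_def approx_points_def ..

lemma approx_polys_antimono: "\<omega>' \<le> \<omega> \<Longrightarrow> approx_polys k \<xi> \<omega> \<subseteq> approx_polys k \<xi> \<omega>'"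
  unfolding approx_polys_def using poly_height_ge_1
  by (auto intro: order_trans[OF _ powr_mono])

lemma infinite_approx_polys_0:
  assumes "1 \<le> k"
  shows "infinite (approx_polys k \<xi> 0)"
proof -
  define F where "F q = [:- round (real q * \<xi>), int q:]" for q :: nat
  have "inj_on F {1..}" by (rule inj_onI) (auto simp: F_def)
  moreover have "F q \<in> approx_polys k \<xi> 0" if "q \<in> {1..}" for q
  proof -
    have "F q \<noteq> 0" using that by (simp add: F_def)
    then have "1 \<le> poly_height (F q)" by (rule poly_height_ge_1)
    moreover have "poly (map_poly of_int (F q)) \<xi> = real q * \<xi> - round (real q * \<xi>)"
      by (simp add: F_def map_poly_pCons mult.commute)
    then have "\<bar>poly (map_poly of_int (F q)) \<xi>\<bar> \<le> 1"
      using of_int_round_abs_le[of "real q * \<xi>"] by (simp add: abs_minus_commute)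
    ultimately show ?thesis unfolding approx_polys_def using assms that by (simp add: F_def)
  qed
  ultimately show ?thesis
    by (metis (no_types, lifting) finite_imageD infinite_Ici finite_subset image_subsetI)
qed

lemma infinite_approx_points_0:
  assumes "1 \<le> n"
  shows "infinite (approx_points n \<xi> 0)"
proof -
  define F where "F q m = (if m \<le> n then round (real q * \<xi> ^ m) else 0)" for q :: nat and m
  have "F q 0 = int q" for q by (simp add: F_def)
  then have "inj_on F {1..}" by (metis inj_onI of_nat_eq_iff)
  moreover have "F q \<in> approx_points n \<xi> 0" if "q \<in> {1..}" for q
  proof -
    have nz: "F q \<noteq> (\<lambda>_. 0)" using that \<open>F q 0 = int q\<close> by (metis atLeast_iff not_one_le_zero of_nat_0_eq_iff)
    moreover have "\<bar>real_of_int (F q 0) * \<xi> ^ m - real_of_int (F q m)\<bar> \<le> 1" if "m \<in> {1..n}" for m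
      using of_int_round_abs_le[of "real q * \<xi> ^ m"] that by (simp add: F_def abs_minus_commute)
    moreover have "1 \<le> pt_norm n (F q)" using nz by (intro pt_norm_ge_1) (auto simp: F_def)
    ultimately show ?thesis unfolding approx_points_def by (auto simp: F_def)
  qed
  ultimately show ?thesis
    by (metis (no_types, lifting) finite_imageD infinite_Ici finite_subset image_subsetI)
qed

lemma omega_exp_nonneg: "1 \<le> k \<Longrightarrow> 0 \<le> omega_exp k \<xi>"
  unfolding omega_exp_eq zero_ereal_def using infinite_approx_polys_0 by (intro Sup_upper) auto

lemma ereal_le_lambda_exp: "infinite (approx_points n \<xi> l) \<Longrightarrow> ereal l \<le> lambda_exp n \<xi>"
  unfolding lambda_exp_eq by (intro Sup_upper) auto

lemma lambda_exp_nonneg: "1 \<le> n \<Longrightarrow> 0 \<le> lambda_exp n \<xi>"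
  using ereal_le_lambda_exp[OF infinite_approx_points_0] by (simp add: zero_ereal_def)

lemma infinite_approx_polys_if_less_omega_exp:
  assumes "ereal \<omega> < omega_exp k \<xi>"
  shows "infinite (approx_polys k \<xi> \<omega>)"
proof -
  obtain \<omega>' where "infinite (approx_polys k \<xi> \<omega>')" "\<omega> < \<omega>'"
    using assms unfolding omega_exp_eq less_Sup_iff by auto
  then show ?thesis using approx_polys_antimono[of \<omega> \<omega>' k \<xi>] finite_subset by (metis less_imp_le)
qed

lemma lambda_exp_ge_transference_bound:
  assumes "\<not> algebraic \<xi>" "1 \<le> k" "k \<le> n" "0 \<le> \<omega>" "ereal \<omega> < omega_exp k \<xi>"
  shows "ereal (transference_bound k n \<omega>) \<le> lambda_exp n \<xi>"
proof (cases "transference_bound k n \<omega> \<le> 0")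
  case True
  then have "ereal (transference_bound k n \<omega>) \<le> 0" by (simp add: zero_ereal_def)
  also have "0 \<le> lambda_exp n \<xi>" using assms(2,3) by (intro lambda_exp_nonneg) simp
  finally show ?thesis .
next
  case False
  have "0 < (real k - 1) * \<omega> + real n" using assms(2-4) by (simp add: add_nonneg_pos)
  with False have "real n - real k < \<omega>" by (simp add: transference_bound_def divide_le_0_iff)
  show ?thesis
  proof (rule dense_le_bounded[of 0])
    show "0 < ereal (transference_bound k n \<omega>)" using False by simp
    fix w :: ereal assume w: "0 < w" "w < ereal (transference_bound k n \<omega>)"
    then obtain l where "w = ereal l" by (cases w) auto
    with w have "0 < l" "l < transference_bound k n \<omega>" by auto
    have "infinite (approx_points n \<xi> l)"
      by (rule infinite_approx_points[OF assms(1-3) \<open>real n - real k < \<omega>\<close>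
            infinite_approx_polys_if_less_omega_exp[OF assms(5)] \<open>0 < l\<close> \<open>l < transference_bound k n \<omega>\<close>])
    then show "w \<le> lambda_exp n \<xi>" unfolding \<open>w = ereal l\<close> by (rule ereal_le_lambda_exp)
  qed
qed

lemma lambda_exp_ge_lim_transference_bound:
  assumes "\<not> algebraic \<xi>" "1 \<le> k" "k \<le> n" "(transference_bound k n \<longlongrightarrow> L) F" "F \<noteq> bot"
    and "eventually (\<lambda>\<omega>. 0 \<le> \<omega> \<and> ereal \<omega> < omega_exp k \<xi>) F"
  shows "ereal L \<le> lambda_exp n \<xi>"
proof (rule tendsto_upperbound)
  show "((\<lambda>\<omega>. ereal (transference_bound k n \<omega>)) \<longlongrightarrow> ereal L) F" using assms(4) by simp
  show "eventually (\<lambda>\<omega>. ereal (transference_bound k n \<omega>) \<le> lambda_exp n \<xi>) F"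
    using assms(6) by eventually_elim (use lambda_exp_ge_transference_bound[OF assms(1-3)] in auto)
qed (use assms(5) in simp)

lemma tendsto_transference_bound_at_left:
  assumes "0 < w" "2 \<le> k"
  shows "(transference_bound k n \<longlongrightarrow> transference_bound k n w) (at_left w)"
proof -
  have "0 < (real k - 1) * w" using assms by simp
  then have "(real k - 1) * w + real n \<noteq> 0" by linarith
  then show ?thesis unfolding transference_bound_def by (intro tendsto_intros)
qed

lemma tendsto_transference_bound_at_top:
  assumes "2 \<le> k"
  shows "(transference_bound k n \<longlongrightarrow> 1 / (real k - 1)) at_top"
proof -
  have "((\<lambda>\<omega>. (1 + (real k - real n) / \<omega>) / ((real k - 1) + real n / \<omega>)) \<longlongrightarrow>
      (1 + 0) / ((real k - 1) + 0)) at_top"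
    using assms by (intro tendsto_intros tendsto_divide_0[OF tendsto_const]
        filterlim_at_top_imp_at_infinity filterlim_ident) auto
  moreover have "eventually (\<lambda>\<omega>. (1 + (real k - real n) / \<omega>) / ((real k - 1) + real n / \<omega>) =
      transference_bound k n \<omega>) at_top"
    using eventually_gt_at_top[of 0]
  proof eventually_elim
    case (elim \<omega>)
    then have "1 + (real k - real n) / \<omega> = (\<omega> - real n + real k) / \<omega>"
      "(real k - 1) + real n / \<omega> = ((real k - 1) * \<omega> + real n) / \<omega>" by (simp_all add: field_simps)
    then show ?case using elim by (simp add: transference_bound_def)
  qed
  ultimately show ?thesis by (auto elim: Lim_transform_eventually)
qed

lemma lambda_exp_ge_transference_bound_omega_exp:
  assumes "\<not> algebraic \<xi>" "2 \<le> k" "k \<le> n" "omega_exp k \<xi> = ereal w"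
  shows "ereal (transference_bound k n w) \<le> lambda_exp n \<xi>"
proof (cases "w = 0")
  case True
  have "ereal (transference_bound k n w) \<le> 0"
    using True assms(3) by (simp add: transference_bound_def divide_nonpos_nonneg zero_ereal_def)
  also have "0 \<le> lambda_exp n \<xi>" using assms(2,3) by (intro lambda_exp_nonneg) simp
  finally show ?thesis .
next
  case False
  then have "w > 0" using omega_exp_nonneg[of k \<xi>] assms(2,4) by simp
  show ?thesis
    using lambda_exp_ge_lim_transference_bound[OF assms(1) _ assms(3)
        tendsto_transference_bound_at_left[OF \<open>w > 0\<close> assms(2)]]
      eventually_at_left_real[OF \<open>w > 0\<close>] assms(2,4)
    by (simp add: eventually_mono)
qed

lemma lambda_exp_ge_omega_exp_infinite:
  assumes "\<not> algebraic \<xi>" "2 \<le> k" "k \<le> n" "omega_exp k \<xi> = \<infinity>"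
  shows "ereal (1 / (real k - 1)) \<le> lambda_exp n \<xi>"
  using lambda_exp_ge_lim_transference_bound[OF assms(1) _ assms(3) tendsto_transference_bound_at_top[OF assms(2)]]
    assms(2,4)
  by (simp add: eventually_ge_at_top)

theorem mainTheorem2:
  fixes \<xi> :: real and k n :: nat
  assumes "\<not> algebraic \<xi>" and "2 \<le> k" and "k \<le> n"
  shows "(omega_exp k \<xi> \<noteq> \<infinity> \<longrightarrow>
           lambda_exp n \<xi> \<ge> ereal ((real_of_ereal (omega_exp k \<xi>) - real n + real k) /
                                  ((real k - 1) * real_of_ereal (omega_exp k \<xi>) + real n)))
       \<and> (omega_exp k \<xi> = \<infinity> \<longrightarrow> lambda_exp n \<xi> \<ge> ereal (1 / (real k - 1)))"
proof -
  have "omega_exp k \<xi> = ereal (real_of_ereal (omega_exp k \<xi>))" if "omega_exp k \<xi> \<noteq> \<infinity>"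
    using that omega_exp_nonneg[of k \<xi>] assms(2) by (cases "omega_exp k \<xi>") auto
  then show ?thesis
    using lambda_exp_ge_transference_bound_omega_exp[OF assms] lambda_exp_ge_omega_exp_infinite[OF assms]
    unfolding transference_bound_def by auto
qed

end
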